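(* Let $A$ be a residually finite group, $H$ a subgroup of $A$, $B$ a group, $K$ a central subgroup of $B$, and $\phi: H \to K$ an isomorphism. Then there exist an $H$-filtration of $A$ and a $K$-filtration of $B$ which are $(H, K, \phi)$-compatible if any of the following holds: (i) $H = Z(A)$ and $B$ is polycyclic-by-finite; (ii) $H$ is normal in $A$, $A/H$ is residually finite, and $B$ is polycyclic-by-finite; (iii) $A$ and $B$ are polycyclic-by-finite.
   Context: $Z(A)$ is the center. A filtration of a group $A$ is a family $\{A_\lambda\}_{\lambda\in\Lambda}$ of normal finite-index subgroups with $\bigcap A_\lambda=\{e\}$; it is an $H$-filtration if $\bigcap_\lambda HA_\lambda=H$. An $H$-filtration $\{A_\lambda\}$ of $A$ and a $K$-filtration $\{B_\lambda\}$ of $B$ with the same index set are $(H,K,\phi)$-compatible if for each $\lambda$ the map $hA_\lambda\mapsto\phi(h)B_\lambda$ is well defined and an isomorphism $HA_\lambda/A_\lambda\to KB_\lambda/B_\lambda$. *)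

theory Defs
  imports "HOL-Algebra.Algebra"
begin

definition grp_center :: "('a, 'm) monoid_scheme \<Rightarrow> 'a set" where
  "grp_center G = {z \<in> carrier G. \<forall>g \<in> carrier G. z \<otimes>\<^bsub>G\<^esub> g = g \<otimes>\<^bsub>G\<^esub> z}"

definition fin_index_normal :: "'a set \<Rightarrow> ('a, 'm) monoid_scheme \<Rightarrow> bool" where
  "fin_index_normal N G \<longleftrightarrow> N \<lhd> G \<and> finite (rcosets\<^bsub>G\<^esub> N)"

definition residually_finite :: "('a, 'm) monoid_scheme \<Rightarrow> bool" where
  "residually_finite G \<longleftrightarrow> group G \<and>
     (\<forall>g \<in> carrier G. g \<noteq> \<one>\<^bsub>G\<^esub> \<longrightarrow> (\<exists>N. fin_index_normal N G \<and> g \<notin> N))"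

definition polycyclic :: "('a, 'm) monoid_scheme \<Rightarrow> bool" where
  "polycyclic G \<longleftrightarrow> group G \<and> (\<exists>(n::nat) (S :: nat \<Rightarrow> 'a set).
     S 0 = carrier G \<and> S n = {\<one>\<^bsub>G\<^esub>} \<and>
     (\<forall>i < n. subgroup (S i) G \<and> S (Suc i) \<lhd> (G\<lparr>carrier := S i\<rparr>) \<and>
        (\<exists>g \<in> S i. \<forall>x \<in> S i. \<exists>k::int. x \<otimes>\<^bsub>G\<^esub> inv\<^bsub>G\<^esub> (g [^]\<^bsub>G\<^esub> k) \<in> S (Suc i))))"

definition polycyclic_by_finite :: "('a, 'm) monoid_scheme \<Rightarrow> bool" where
  "polycyclic_by_finite G \<longleftrightarrow> group G \<and>
     (\<exists>N. fin_index_normal N G \<and> polycyclic (G\<lparr>carrier := N\<rparr>))"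

text \<open>A filtration of G indexed by I: normal finite-index subgroups with trivial intersection
  (intersection taken inside the group, so an empty family has intersection carrier G).\<close>
definition filtration :: "('a, 'm) monoid_scheme \<Rightarrow> 'i set \<Rightarrow> ('i \<Rightarrow> 'a set) \<Rightarrow> bool" where
  "filtration G I F \<longleftrightarrow> (\<forall>l \<in> I. fin_index_normal (F l) G) \<and>
     carrier G \<inter> (\<Inter>l \<in> I. F l) = {\<one>\<^bsub>G\<^esub>}"

definition H_filtration :: "('a, 'm) monoid_scheme \<Rightarrow> 'a set \<Rightarrow> 'i set \<Rightarrow> ('i \<Rightarrow> 'a set) \<Rightarrow> bool" where
  "H_filtration G H I F \<longleftrightarrow> filtration G I F \<and>
     carrier G \<inter> (\<Inter>l \<in> I. H <#>\<^bsub>G\<^esub> F l) = H"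

definition induced_map ::
  "('a, 'm) monoid_scheme \<Rightarrow> ('b, 'n) monoid_scheme \<Rightarrow> 'a set \<Rightarrow> ('a \<Rightarrow> 'b) \<Rightarrow> 'a set \<Rightarrow> 'b set
   \<Rightarrow> 'a set \<Rightarrow> 'b set" where
  "induced_map A B H phi N M C = M #>\<^bsub>B\<^esub> phi (SOME h. h \<in> H \<and> C = N #>\<^bsub>A\<^esub> h)"

definition compatible ::
  "('a, 'm) monoid_scheme \<Rightarrow> ('b, 'n) monoid_scheme \<Rightarrow> 'a set \<Rightarrow> 'b set \<Rightarrow> ('a \<Rightarrow> 'b)
   \<Rightarrow> 'i set \<Rightarrow> ('i \<Rightarrow> 'a set) \<Rightarrow> ('i \<Rightarrow> 'b set) \<Rightarrow> bool" where
  "compatible A B H K phi I FA FB \<longleftrightarrow>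
     H_filtration A H I FA \<and> H_filtration B K I FB \<and>
     (\<forall>l \<in> I.
        (\<forall>h \<in> H. \<forall>h' \<in> H. FA l #>\<^bsub>A\<^esub> h = FA l #>\<^bsub>A\<^esub> h' \<longrightarrow>
            FB l #>\<^bsub>B\<^esub> phi h = FB l #>\<^bsub>B\<^esub> phi h') \<and>
        induced_map A B H phi (FA l) (FB l)
          \<in> iso ((A\<lparr>carrier := H <#>\<^bsub>A\<^esub> FA l\<rparr>) Mod (FA l))
                ((B\<lparr>carrier := K <#>\<^bsub>B\<^esub> FB l\<rparr>) Mod (FB l)))"

end

theory Submission
  imports Defs
begin

text \<open>Take as index set all pairs \<open>(N, M)\<close> of normal subgroups of finite index in \<open>A\<close> and \<open>B\<close>
  with \<open>\<phi>(H \<inter> N) = K \<inter> M\<close>; for such a pair \<open>h N \<mapsto> \<phi>(h) M\<close> is a well-defined isomorphism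
  \<open>H N / N \<cong> K M / M\<close>. Every \<open>N\<close> has a partner \<open>M\<close>: \<open>L = \<phi>(H \<inter> N)\<close> is central, hence normal,
  of finite index in \<open>K\<close>, and since \<open>L\<close> is closed in the profinite topology of \<open>B\<close> there is a
  normal subgroup \<open>M\<^sub>0\<close> of finite index with \<open>K \<inter> L M\<^sub>0 = L\<close>. The intersection conditions on the
  filtrations then reduce to residual finiteness of \<open>A\<close>, to \<open>H\<close> being profinitely closed in
  \<open>A\<close> (which is what each of the three hypotheses provides) and to \<open>K\<close> being profinitely
  closed in \<open>B\<close>.

  Closedness in \<open>B\<close> comes from Mal'cev's theorem that polycyclic-by-finite groups are subgroup
  separable, proved along a polycyclic series: separability passes from a normal subgroup \<open>N\<close>
  to \<open>S\<close> when \<open>S / N\<close> is finite, or infinite cyclic and \<open>N\<close> finitely generated; the latter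
  case uses that a finitely generated group has only finitely many subgroups of a given index.\<close>

lemma factor_through:
  assumes "\<And>x y. x \<in> S \<Longrightarrow> y \<in> S \<Longrightarrow> g x = g y \<Longrightarrow> f x = f y"
  obtains h where "\<And>x. x \<in> S \<Longrightarrow> f x = h (g x)"
proof -
  define h where "h p = f (SOME y. y \<in> S \<and> g y = p)" for p
  have "f x = h (g x)" if x: "x \<in> S" for x
  proof -
    have "(SOME y. y \<in> S \<and> g y = g x) \<in> S \<and> g (SOME y. y \<in> S \<and> g y = g x) = g x"
      by (rule someI_ex) (use x in blast)
    then show ?thesis unfolding h_def by (intro assms[OF x]) auto
  qed
  then show thesis by (rule that)
qed

lemma finite_image_factor:
  assumes "finite (g ` S)" and "\<And>x y. x \<in> S \<Longrightarrow> y \<in> S \<Longrightarrow> g x = g y \<Longrightarrow> f x = f y"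
  shows "finite (f ` S)"
proof -
  obtain h where "\<And>x. x \<in> S \<Longrightarrow> f x = h (g x)"
    using factor_through[of S g f] assms(2) by blast
  then have "f ` S = h ` g ` S" by (simp add: image_image)
  then show ?thesis using assms(1) by simp
qed

lemma card_image_factor:
  assumes "\<And>x y. x \<in> S \<Longrightarrow> y \<in> S \<Longrightarrow> g x = g y \<longleftrightarrow> f x = f y"
  shows "card (f ` S) = card (g ` S)"
proof -
  obtain h where h: "\<And>x. x \<in> S \<Longrightarrow> f x = h (g x)"
    using factor_through[of S g f] assms by blast
  have "inj_on h (g ` S)"
  proof (rule inj_onI)
    fix a b assume "a \<in> g ` S" "b \<in> g ` S" "h a = h b"
    then show "a = b" using h assms by auto
  qed
  moreover have "f ` S = h ` g ` S" using h by (simp add: image_image)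
  ultimately show ?thesis by (simp add: card_image)
qed

definition finite_index :: "('a, 'm) monoid_scheme \<Rightarrow> 'a set \<Rightarrow> 'a set \<Rightarrow> bool" where
  "finite_index G S U \<longleftrightarrow> (\<exists>F. finite F \<and> F \<subseteq> S \<and> S \<subseteq> U <#>\<^bsub>G\<^esub> F)"

context group
begin

lemma inv_mult_cancel_left [simp]: "x \<in> carrier G \<Longrightarrow> y \<in> carrier G \<Longrightarrow> inv x \<otimes> (x \<otimes> y) = y"
  by (simp add: m_assoc [symmetric])

lemma mult_inv_cancel_left [simp]: "x \<in> carrier G \<Longrightarrow> y \<in> carrier G \<Longrightarrow> x \<otimes> (inv x \<otimes> y) = y"
  by (simp add: m_assoc [symmetric])

lemma mem_set_mult_iff: "x \<in> A <#> B \<longleftrightarrow> (\<exists>a\<in>A. \<exists>b\<in>B. x = a \<otimes> b)"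
  unfolding set_mult_def by auto

lemma set_multI: "a \<in> A \<Longrightarrow> b \<in> B \<Longrightarrow> a \<otimes> b \<in> A <#> B"
  unfolding set_mult_def by auto

lemma set_mult_subset_subgroup:
  assumes "subgroup S G" "P \<subseteq> S" "Q \<subseteq> S"
  shows "P <#> Q \<subseteq> S"
  using assms subgroup.m_closed by (fastforce simp: mem_set_mult_iff)

lemma subset_set_mult_left:
  assumes "subgroup Q G" "P \<subseteq> carrier G"
  shows "P \<subseteq> P <#> Q"
  using assms set_multI[OF _ subgroup.one_closed[OF assms(1)]] by fastforce

lemma subset_set_mult_right:
  assumes "subgroup P G" "Q \<subseteq> carrier G"
  shows "Q \<subseteq> P <#> Q"
  using assms set_multI[OF subgroup.one_closed[OF assms(1)]] by fastforce

lemma rcos_eq_iff: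
  assumes "subgroup U G" "x \<in> carrier G" "y \<in> carrier G"
  shows "U #> x = U #> y \<longleftrightarrow> x \<otimes> inv y \<in> U"
proof
  assume "U #> x = U #> y"
  then have "x \<in> U #> y" using rcos_self[OF assms(2,1)] by simp
  then show "x \<otimes> inv y \<in> U" using subgroup.rcos_module_imp[OF assms(1) is_group assms(3)] by simp
next
  assume "x \<otimes> inv y \<in> U"
  then have "x \<in> U #> y" using subgroup.rcos_module_rev[OF assms(1) is_group assms(3,2)] by simp
  then show "U #> x = U #> y" using repr_independence[OF _ assms(3,1)] by simp
qed

lemma rcos_eq_self_iff:
  assumes "subgroup U G" "x \<in> carrier G"
  shows "U #> x = U \<longleftrightarrow> x \<in> U"
  using coset_join1[OF _ assms(2,1)] coset_join2[OF assms(2,1)] by blast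

lemma finite_index_iff_finite_rcosets:
  assumes "subgroup U G" "subgroup S G" "U \<subseteq> S"
  shows "finite_index G S U \<longleftrightarrow> finite ((\<lambda>x. U #> x) ` S)"
proof
  assume "finite_index G S U"
  then obtain F where F: "finite F" "F \<subseteq> S" "S \<subseteq> U <#> F" unfolding finite_index_def by auto
  have "(\<lambda>x. U #> x) ` S \<subseteq> (\<lambda>x. U #> x) ` F"
  proof
    fix C assume "C \<in> (\<lambda>x. U #> x) ` S"
    then obtain x where x: "x \<in> S" "C = U #> x" by auto
    then obtain u f where uf: "u \<in> U" "f \<in> F" "x = u \<otimes> f" using F(3) mem_set_mult_iff by blast
    have "f \<in> carrier G" using uf F(2) subgroup.mem_carrier[OF assms(2)] by auto
    moreover have "x \<in> U #> f" using uf unfolding r_coset_def by auto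
    ultimately have "U #> f = U #> x" using repr_independence assms(1) by blast
    then show "C \<in> (\<lambda>x. U #> x) ` F" using x uf by auto
  qed
  then show "finite ((\<lambda>x. U #> x) ` S)" using F(1) finite_subset by blast
next
  assume fin: "finite ((\<lambda>x. U #> x) ` S)"
  define rep where "rep C = (SOME x. x \<in> S \<and> C = U #> x)" for C
  have rep: "rep (U #> x) \<in> S \<and> U #> x = U #> rep (U #> x)" if "x \<in> S" for x
    unfolding rep_def by (rule someI_ex) (use that in auto)
  have "S \<subseteq> U <#> rep ` (\<lambda>x. U #> x) ` S"
  proof
    fix x assume x: "x \<in> S"
    have "x \<in> U #> rep (U #> x)"
      using rep[OF x] rcos_self[OF subgroup.mem_carrier[OF assms(2) x] assms(1)] by simp
    then show "x \<in> U <#> rep ` (\<lambda>x. U #> x) ` S" using x unfolding r_coset_def mem_set_mult_iff by blast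
  qed
  moreover have "rep ` (\<lambda>x. U #> x) ` S \<subseteq> S" using rep by auto
  ultimately show "finite_index G S U" unfolding finite_index_def using fin by blast
qed

lemma finite_index_if_finite_image:
  assumes "subgroup U G" "subgroup S G" "U \<subseteq> S" "finite (f ` S)"
    and "\<And>x y. x \<in> S \<Longrightarrow> y \<in> S \<Longrightarrow> f x = f y \<Longrightarrow> x \<otimes> inv y \<in> U"
  shows "finite_index G S U"
proof -
  have "finite ((\<lambda>x. U #> x) ` S)"
  proof (rule finite_image_factor[OF assms(4)])
    fix x y assume "x \<in> S" "y \<in> S" "f x = f y"
    then show "U #> x = U #> y"
      using assms(5) rcos_eq_iff[OF assms(1)] subgroup.mem_carrier[OF assms(2)] by blast
  qed
  then show ?thesis using finite_index_iff_finite_rcosets[OF assms(1-3)] by blast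
qed

lemma finite_index_mono:
  assumes "U \<subseteq> V" "finite_index G S U"
  shows "finite_index G S V"
proof -
  obtain F where "finite F" "F \<subseteq> S" "S \<subseteq> U <#> F" using assms(2) unfolding finite_index_def by auto
  moreover have "U <#> F \<subseteq> V <#> F" using mono_set_mult[OF assms(1) order_refl] .
  ultimately show ?thesis unfolding finite_index_def by blast
qed

lemma finite_index_refl: "subgroup S G \<Longrightarrow> finite_index G S S"
  unfolding finite_index_def
  by (rule exI[of _ "{\<one>}"]) (auto simp: mem_set_mult_iff subgroup.one_closed subgroup.mem_carrier)

lemma finite_index_trans:
  assumes S: "subgroup S G" and V: "V \<subseteq> S" "finite_index G S V"
    and U: "finite_index G V U" "U \<subseteq> carrier G"
  shows "finite_index G S U"
proof -
  obtain F1 where F1: "finite F1" "F1 \<subseteq> S" "S \<subseteq> V <#> F1"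
    using V(2) unfolding finite_index_def by auto
  obtain F2 where F2: "finite F2" "F2 \<subseteq> V" "V \<subseteq> U <#> F2"
    using U(1) unfolding finite_index_def by auto
  have "F2 <#> F1 = (\<lambda>(a, b). a \<otimes> b) ` (F2 \<times> F1)" unfolding set_mult_def by auto
  then have "finite (F2 <#> F1)" using F1(1) F2(1) by simp
  moreover have "F2 <#> F1 \<subseteq> S" using F1(2) F2(2) V(1) set_mult_subset_subgroup[OF S] by blast
  moreover have "S \<subseteq> U <#> (F2 <#> F1)"
  proof -
    have "S \<subseteq> (U <#> F2) <#> F1" using F1(3) mono_set_mult[OF F2(3) order_refl] by blast
    also have "\<dots> = U <#> (F2 <#> F1)"
      using set_mult_assoc U(2) F1(2) F2(2) V(1) subgroup.subset[OF S] by (metis order_trans)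
    finally show ?thesis .
  qed
  ultimately show ?thesis unfolding finite_index_def by blast
qed

lemma finite_index_Int:
  assumes S: "subgroup S G" and U: "subgroup U G" "U \<subseteq> S" "finite_index G S U"
    and V: "subgroup V G" "V \<subseteq> S" "finite_index G S V"
  shows "finite_index G S (U \<inter> V)"
proof (rule finite_index_if_finite_image[where f = "\<lambda>x. (U #> x, V #> x)"])
  show "subgroup (U \<inter> V) G" using subgroups_Inter_pair U V by blast
  have "(\<lambda>x. (U #> x, V #> x)) ` S \<subseteq> ((\<lambda>x. U #> x) ` S) \<times> ((\<lambda>x. V #> x) ` S)" by auto
  moreover have "finite (((\<lambda>x. U #> x) ` S) \<times> ((\<lambda>x. V #> x) ` S))"
    using finite_index_iff_finite_rcosets U V S by blast
  ultimately show "finite ((\<lambda>x. (U #> x, V #> x)) ` S)" using finite_subset by blast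
next
  fix x y assume "x \<in> S" "y \<in> S" "(U #> x, V #> x) = (U #> y, V #> y)"
  then show "x \<otimes> inv y \<in> U \<inter> V" using rcos_eq_iff U(1) V(1) subgroup.mem_carrier[OF S] by auto
qed (use assms in auto)

lemma finite_index_Inter:
  assumes "finite F" "subgroup S G"
    and "\<And>U. U \<in> F \<Longrightarrow> subgroup U G \<and> U \<subseteq> S \<and> finite_index G S U"
  shows "subgroup (S \<inter> \<Inter>F) G \<and> finite_index G S (S \<inter> \<Inter>F)"
  using assms
proof (induction F rule: finite_induct)
  case empty
  then show ?case using finite_index_refl by simp
next
  case (insert U F)
  then have IH: "subgroup (S \<inter> \<Inter>F) G" "finite_index G S (S \<inter> \<Inter>F)" by auto
  have U: "subgroup U G" "U \<subseteq> S" "finite_index G S U" using insert by auto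
  have eq: "S \<inter> \<Inter>(insert U F) = U \<inter> (S \<inter> \<Inter>F)" using U by auto
  show ?case unfolding eq
    using finite_index_Int[OF insert(4) U IH(1) _ IH(2)] subgroups_Inter_pair[OF U(1) IH(1)] by blast
qed

lemma finite_index_restrict:
  assumes S: "subgroup S G" and U: "subgroup U G" "U \<subseteq> S" "finite_index G S U"
    and P: "subgroup P G" "P \<subseteq> S"
  shows "finite_index G P (P \<inter> U)"
proof (rule finite_index_if_finite_image[where f = "\<lambda>x. U #> x"])
  show "subgroup (P \<inter> U) G" using subgroups_Inter_pair[OF P(1) U(1)] .
  have "finite ((\<lambda>x. U #> x) ` S)" using finite_index_iff_finite_rcosets U S by blast
  then show "finite ((\<lambda>x. U #> x) ` P)" using P(2) by (meson finite_subset image_mono)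
next
  fix x y assume xy: "x \<in> P" "y \<in> P" "U #> x = U #> y"
  then have "x \<otimes> inv y \<in> U" using rcos_eq_iff[OF U(1)] subgroup.mem_carrier[OF P(1)] by blast
  moreover have "x \<otimes> inv y \<in> P" using xy subgroup.m_closed[OF P(1)] subgroup.m_inv_closed[OF P(1)]
    by blast
  ultimately show "x \<otimes> inv y \<in> P \<inter> U" by blast
qed (use P in auto)

lemma finite_index_power:
  assumes S: "subgroup S G" and T: "subgroup T G" "T \<subseteq> S" "finite_index G S T" and t: "t \<in> S"
  obtains r :: int where "b < r" "t [^] r \<in> T"
proof -
  have tc: "t \<in> carrier G" using t subgroup.mem_carrier[OF S] by blast
  have "range (\<lambda>i::nat. T #> t [^] int i) \<subseteq> (\<lambda>x. T #> x) ` S"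
    using subgroup_int_pow_closed[OF S t] by blast
  moreover have "finite ((\<lambda>x. T #> x) ` S)"
    using finite_index_iff_finite_rcosets[OF T(1) S T(2)] T(3) by simp
  ultimately have "finite (range (\<lambda>i::nat. T #> t [^] int i))" by (rule finite_subset)
  then have "\<not> inj (\<lambda>i::nat. T #> t [^] int i)" using finite_imageD by blast
  then obtain i j :: nat where ij: "i < j" "T #> t [^] int i = T #> t [^] int j"
    unfolding inj_def by (metis linorder_neqE_nat)
  then have "t [^] int i \<otimes> inv (t [^] int j) \<in> T" using rcos_eq_iff[OF T(1)] tc by simp
  then have "inv (t [^] (int i - int j)) \<in> T"
    using int_pow_diff[OF tc] subgroup.m_inv_closed[OF T(1)] by simp
  then have "t [^] (int j - int i) \<in> T" using int_pow_neg[OF tc, of "int i - int j"] by simp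
  then have "t [^] ((int j - int i) * (\<bar>b\<bar> + 1)) \<in> T"
    using subgroup_int_pow_closed[OF T(1)] int_pow_pow[OF tc] by metis
  moreover have "\<bar>b\<bar> + 1 \<le> (int j - int i) * (\<bar>b\<bar> + 1)"
    using mult_right_mono[of 1 "int j - int i" "\<bar>b\<bar> + 1"] ij(1) by simp
  then have "b < (int j - int i) * (\<bar>b\<bar> + 1)" by linarith
  ultimately show ?thesis using that by blast
qed

end

definition normalises :: "('a, 'm) monoid_scheme \<Rightarrow> 'a set \<Rightarrow> 'a set \<Rightarrow> bool" where
  "normalises G Y P \<longleftrightarrow> (\<forall>y\<in>Y. \<forall>p\<in>P. y \<otimes>\<^bsub>G\<^esub> p \<otimes>\<^bsub>G\<^esub> inv\<^bsub>G\<^esub> y \<in> P)"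

definition normal_core :: "('a, 'm) monoid_scheme \<Rightarrow> 'a set \<Rightarrow> 'a set \<Rightarrow> 'a set" where
  "normal_core G S V = {x \<in> S. \<forall>s\<in>S. s \<otimes>\<^bsub>G\<^esub> x \<otimes>\<^bsub>G\<^esub> inv\<^bsub>G\<^esub> s \<in> V}"

context group
begin

lemma normalises_mono: "normalises G Y P \<Longrightarrow> Z \<subseteq> Y \<Longrightarrow> normalises G Z P"
  unfolding normalises_def by blast

lemma normal_iff_normalises:
  assumes "subgroup N G"
  shows "N \<lhd> G \<longleftrightarrow> normalises G (carrier G) N"
  unfolding normalises_def using normal_invE(2) normal_invI[OF assms] by blast

lemma set_mult_commute_if_normalises:
  assumes P: "subgroup P G" and Q: "subgroup Q G" and nQP: "normalises G Q P"
  shows "P <#> Q = Q <#> P"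
proof (intro equalityI subsetI)
  fix z assume "z \<in> P <#> Q"
  then obtain p q where pq: "p \<in> P" "q \<in> Q" "z = p \<otimes> q" using mem_set_mult_iff by blast
  have c: "p \<in> carrier G" "q \<in> carrier G" using pq subgroup.mem_carrier P Q by metis+
  have "inv q \<otimes> p \<otimes> inv (inv q) \<in> P"
    using nQP pq subgroup.m_inv_closed[OF Q] unfolding normalises_def by blast
  moreover have "z = q \<otimes> (inv q \<otimes> p \<otimes> inv (inv q))" using c pq by (simp add: m_assoc)
  ultimately show "z \<in> Q <#> P" using pq set_multI by metis
next
  fix z assume "z \<in> Q <#> P"
  then obtain p q where pq: "p \<in> P" "q \<in> Q" "z = q \<otimes> p" using mem_set_mult_iff by blast
  have c: "p \<in> carrier G" "q \<in> carrier G" using pq subgroup.mem_carrier P Q by metis+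
  have "q \<otimes> p \<otimes> inv q \<in> P" using nQP pq unfolding normalises_def by blast
  moreover have "z = (q \<otimes> p \<otimes> inv q) \<otimes> q" using c pq by (simp add: m_assoc)
  ultimately show "z \<in> P <#> Q" using pq set_multI by metis
qed

lemma subgroup_set_mult_if_normalises:
  assumes P: "subgroup P G" and Q: "subgroup Q G" and nQP: "normalises G Q P"
  shows "subgroup (P <#> Q) G"
proof (rule subgroupI)
  show "P <#> Q \<subseteq> carrier G" using setmult_subset_G subgroup.subset P Q by metis
  show "P <#> Q \<noteq> {}" using set_multI[OF subgroup.one_closed[OF P] subgroup.one_closed[OF Q]] by blast
next
  fix a assume "a \<in> P <#> Q"
  then obtain p q where pq: "p \<in> P" "q \<in> Q" "a = p \<otimes> q" using mem_set_mult_iff by blast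
  have "inv a = inv q \<otimes> inv p"
    using pq subgroup.mem_carrier[OF P] subgroup.mem_carrier[OF Q] by (simp add: inv_mult_group)
  then have "inv a \<in> Q <#> P" using pq set_multI subgroup.m_inv_closed P Q by metis
  then show "inv a \<in> P <#> Q" using set_mult_commute_if_normalises[OF assms] by simp
next
  fix a b assume "a \<in> P <#> Q" "b \<in> P <#> Q"
  then obtain p q p' q' where pq: "p \<in> P" "q \<in> Q" "a = p \<otimes> q" "p' \<in> P" "q' \<in> Q" "b = p' \<otimes> q'"
    using mem_set_mult_iff by meson
  have c: "p \<in> carrier G" "q \<in> carrier G" "p' \<in> carrier G" "q' \<in> carrier G"
    using pq subgroup.mem_carrier P Q by metis+
  have "a \<otimes> b = (p \<otimes> (q \<otimes> p' \<otimes> inv q)) \<otimes> (q \<otimes> q')" using c pq by (simp add: m_assoc)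
  moreover have "q \<otimes> p' \<otimes> inv q \<in> P" using nQP pq unfolding normalises_def by blast
  then have "p \<otimes> (q \<otimes> p' \<otimes> inv q) \<in> P" using pq subgroup.m_closed P by metis
  moreover have "q \<otimes> q' \<in> Q" using pq subgroup.m_closed Q by metis
  ultimately show "a \<otimes> b \<in> P <#> Q" using set_multI by metis
qed

lemma finite_index_set_mult:
  assumes N: "subgroup N G" and W: "subgroup W G" "W \<subseteq> N" "finite_index G N W"
    and H: "subgroup H G" "normalises G H N" "normalises G H W"
  shows "finite_index G (N <#> H) (W <#> H)"
proof -
  obtain R where R: "finite R" "R \<subseteq> N" "N \<subseteq> W <#> R" using W(3) unfolding finite_index_def by blast
  have "N <#> H \<subseteq> W <#> H <#> R"
  proof
    fix x assume "x \<in> N <#> H"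
    then obtain n h where nh: "n \<in> N" "h \<in> H" "x = n \<otimes> h" using mem_set_mult_iff by blast
    have hc: "h \<in> carrier G" "inv h \<in> H"
      using nh(2) subgroup.mem_carrier[OF H(1)] subgroup.m_inv_closed[OF H(1)] by auto
    have "inv h \<otimes> n \<otimes> inv (inv h) \<in> N" using H(2) hc nh(1) unfolding normalises_def by blast
    then obtain w \<rho> where wr: "w \<in> W" "\<rho> \<in> R" "inv h \<otimes> n \<otimes> inv (inv h) = w \<otimes> \<rho>"
      using R(3) mem_set_mult_iff by blast
    have c: "n \<in> carrier G" "w \<in> carrier G" "\<rho> \<in> carrier G"
      using nh(1) wr(1,2) R(2) W(2) subgroup.mem_carrier[OF N] by auto
    have "x = h \<otimes> (inv h \<otimes> n \<otimes> inv (inv h))" using nh(3) c hc by (simp add: m_assoc)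
    also have "\<dots> = (h \<otimes> w \<otimes> inv h) \<otimes> h \<otimes> \<rho>" unfolding wr(3) using c hc by (simp add: m_assoc)
    finally have "x = (h \<otimes> w \<otimes> inv h) \<otimes> h \<otimes> \<rho>" .
    moreover have "h \<otimes> w \<otimes> inv h \<in> W" using H(3) nh(2) wr(1) unfolding normalises_def by blast
    ultimately show "x \<in> W <#> H <#> R" using nh(2) wr(2) set_multI by metis
  qed
  moreover have "R \<subseteq> N <#> H" using R(2) subset_set_mult_left[OF H(1) subgroup.subset[OF N]] by blast
  ultimately show ?thesis unfolding finite_index_def using R(1) by blast
qed

lemma normal_core_subset: "normal_core G S V \<subseteq> S"
  unfolding normal_core_def by blast

lemma normal_core_subset_subgroup:
  assumes "subgroup S G"
  shows "normal_core G S V \<subseteq> V"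
proof
  fix x assume "x \<in> normal_core G S V"
  then have "x \<in> S" "\<one> \<otimes> x \<otimes> inv \<one> \<in> V"
    unfolding normal_core_def using subgroup.one_closed[OF assms] by auto
  then show "x \<in> V" using subgroup.mem_carrier[OF assms] by simp
qed

lemma normal_core_subgroup:
  assumes S: "subgroup S G" and V: "subgroup V G"
  shows "subgroup (normal_core G S V) G"
proof (rule subgroupI)
  have Sc: "\<And>x. x \<in> S \<Longrightarrow> x \<in> carrier G" using subgroup.mem_carrier[OF S] .
  show "normal_core G S V \<subseteq> carrier G" unfolding normal_core_def using Sc by blast
  have "\<one> \<in> normal_core G S V"
    unfolding normal_core_def using S V Sc by (simp add: subgroup.one_closed)
  then show "normal_core G S V \<noteq> {}" by blast
next
  fix a assume a: "a \<in> normal_core G S V"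
  have "s \<otimes> inv a \<otimes> inv s \<in> V" if s: "s \<in> S" for s
  proof -
    have "inv (s \<otimes> a \<otimes> inv s) \<in> V"
      using a s subgroup.m_inv_closed[OF V] unfolding normal_core_def by blast
    moreover have "inv (s \<otimes> a \<otimes> inv s) = s \<otimes> inv a \<otimes> inv s"
      using s a subgroup.mem_carrier[OF S] unfolding normal_core_def
      by (simp add: m_assoc inv_mult_group)
    ultimately show ?thesis by simp
  qed
  then show "inv a \<in> normal_core G S V"
    using a subgroup.m_inv_closed[OF S] unfolding normal_core_def by blast
next
  fix a b assume ab: "a \<in> normal_core G S V" "b \<in> normal_core G S V"
  have "s \<otimes> (a \<otimes> b) \<otimes> inv s \<in> V" if s: "s \<in> S" for s
  proof -
    have "(s \<otimes> a \<otimes> inv s) \<otimes> (s \<otimes> b \<otimes> inv s) \<in> V"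
      using ab s subgroup.m_closed[OF V] unfolding normal_core_def by blast
    moreover have "(s \<otimes> a \<otimes> inv s) \<otimes> (s \<otimes> b \<otimes> inv s) = s \<otimes> (a \<otimes> b) \<otimes> inv s"
      using s ab subgroup.mem_carrier[OF S] unfolding normal_core_def by (simp add: m_assoc)
    ultimately show ?thesis by simp
  qed
  then show "a \<otimes> b \<in> normal_core G S V"
    using ab subgroup.m_closed[OF S] unfolding normal_core_def by blast
qed

lemma normalises_normal_core:
  assumes S: "subgroup S G"
  shows "normalises G S (normal_core G S V)"
  unfolding normalises_def
proof (intro ballI)
  fix x c assume x: "x \<in> S" and c: "c \<in> normal_core G S V"
  then have cS: "c \<in> S" unfolding normal_core_def by blast
  have "x \<otimes> c \<otimes> inv x \<in> S" using S x cS by (simp add: subgroup.m_closed subgroup.m_inv_closed)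
  moreover have "s \<otimes> (x \<otimes> c \<otimes> inv x) \<otimes> inv s \<in> V" if s: "s \<in> S" for s
  proof -
    have "(s \<otimes> x) \<otimes> c \<otimes> inv (s \<otimes> x) \<in> V"
      using c subgroup.m_closed[OF S s x] unfolding normal_core_def by blast
    moreover have "(s \<otimes> x) \<otimes> c \<otimes> inv (s \<otimes> x) = s \<otimes> (x \<otimes> c \<otimes> inv x) \<otimes> inv s"
      using s x cS subgroup.mem_carrier[OF S] by (simp add: m_assoc inv_mult_group)
    ultimately show ?thesis by simp
  qed
  ultimately show "x \<otimes> c \<otimes> inv x \<in> normal_core G S V" unfolding normal_core_def by blast
qed

text \<open>The normal core is the kernel of the action of \<open>S\<close> on the finitely many cosets of \<open>V\<close>.\<close>

lemma finite_index_normal_core: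
  assumes S: "subgroup S G" and V: "subgroup V G" "V \<subseteq> S" "finite_index G S V"
  shows "finite_index G S (normal_core G S V)"
proof -
  define Cos where "Cos = (\<lambda>y. V #> y) ` S"
  have Sc: "\<And>x. x \<in> S \<Longrightarrow> x \<in> carrier G" using subgroup.mem_carrier[OF S] .
  have Vc: "V \<subseteq> carrier G" using subgroup.subset[OF V(1)] .
  have act: "(V #> y) #> x = V #> (y \<otimes> x)" if "y \<in> S" "x \<in> S" for x y
    using coset_mult_assoc[OF Vc] that Sc by simp
  show ?thesis
  proof (rule finite_index_if_finite_image[where f = "\<lambda>x. \<lambda>C\<in>Cos. C #> x"])
    show "subgroup (normal_core G S V) G" by (rule normal_core_subgroup[OF S V(1)])
    show "normal_core G S V \<subseteq> S" by (rule normal_core_subset)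
    have "(\<lambda>x. \<lambda>C\<in>Cos. C #> x) ` S \<subseteq> Cos \<rightarrow>\<^sub>E Cos"
      using act subgroup.m_closed[OF S] unfolding Cos_def by auto
    moreover have "finite (Cos \<rightarrow>\<^sub>E Cos)"
      using finite_index_iff_finite_rcosets V S unfolding Cos_def by (simp add: finite_PiE)
    ultimately show "finite ((\<lambda>x. \<lambda>C\<in>Cos. C #> x) ` S)" by (rule finite_subset)
  next
    fix x y assume x: "x \<in> S" and y: "y \<in> S" and eq: "(\<lambda>C\<in>Cos. C #> x) = (\<lambda>C\<in>Cos. C #> y)"
    have "s \<otimes> (x \<otimes> inv y) \<otimes> inv s \<in> V" if s: "s \<in> S" for s
    proof -
      have "V #> s \<in> Cos" unfolding Cos_def using s by blast
      then have "V #> (s \<otimes> x) = V #> (s \<otimes> y)" using eq act[OF s] x y by (metis restrict_apply')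
      then have "(s \<otimes> x) \<otimes> inv (s \<otimes> y) \<in> V" using rcos_eq_iff V(1) Sc s x y m_closed by metis
      then show ?thesis using Sc s x y by (simp add: m_assoc inv_mult_group)
    qed
    moreover have "x \<otimes> inv y \<in> S" using x y S by (metis subgroup.m_closed subgroup.m_inv_closed)
    ultimately show "x \<otimes> inv y \<in> normal_core G S V" unfolding normal_core_def by blast
  qed (use S in auto)
qed

end

context group
begin

lemma fin_index_normal_iff: "fin_index_normal N G \<longleftrightarrow> N \<lhd> G \<and> finite_index G (carrier G) N"
proof -
  have "rcosets N = (\<lambda>x. N #> x) ` carrier G" unfolding RCOSETS_def by auto
  then show ?thesis unfolding fin_index_normal_def
    using finite_index_iff_finite_rcosets[OF _ subgroup_self] normal_imp_subgroup subgroup.subset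
    by metis
qed

lemma fin_index_normal_subgroup: "fin_index_normal N G \<Longrightarrow> subgroup N G"
  unfolding fin_index_normal_def using normal_imp_subgroup by blast

lemma fin_index_normal_carrier: "fin_index_normal (carrier G) G"
  unfolding fin_index_normal_iff using normal_self finite_index_refl[OF subgroup_self] by blast

lemma fin_index_normal_Int:
  assumes "fin_index_normal M1 G" "fin_index_normal M2 G"
  shows "fin_index_normal (M1 \<inter> M2) G"
  using assms normal_subgroup_intersect finite_index_Int[OF subgroup_self] fin_index_normal_subgroup
    subgroup.subset unfolding fin_index_normal_iff by metis

lemma fin_index_normal_Inter:
  assumes "finite F" "\<And>M. M \<in> F \<Longrightarrow> fin_index_normal M G"
  shows "fin_index_normal (carrier G \<inter> \<Inter>F) G"
  using assms
proof (induction F rule: finite_induct)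
  case empty
  then show ?case using fin_index_normal_carrier by simp
next
  case (insert M F)
  then have "carrier G \<inter> \<Inter>(insert M F) = M \<inter> (carrier G \<inter> \<Inter>F)"
    using subgroup.subset[OF fin_index_normal_subgroup] by blast
  then show ?case using fin_index_normal_Int insert by simp
qed

lemma normal_set_mult:
  assumes L: "L \<lhd> G" and M: "M \<lhd> G"
  shows "L <#> M \<lhd> G"
proof -
  have sL: "subgroup L G" and sM: "subgroup M G" using L M normal_imp_subgroup by auto
  have nL: "normalises G (carrier G) L" and nM: "normalises G (carrier G) M"
    using L M sL sM normal_iff_normalises by blast+
  have "normalises G (carrier G) (L <#> M)" unfolding normalises_def
  proof (intro ballI)
    fix x h assume x: "x \<in> carrier G" and "h \<in> L <#> M"
    then obtain l m where lm: "l \<in> L" "m \<in> M" "h = l \<otimes> m" using mem_set_mult_iff by blast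
    have "x \<otimes> h \<otimes> inv x = (x \<otimes> l \<otimes> inv x) \<otimes> (x \<otimes> m \<otimes> inv x)"
      using x lm subgroup.mem_carrier[OF sL] subgroup.mem_carrier[OF sM] by (simp add: m_assoc)
    then show "x \<otimes> h \<otimes> inv x \<in> L <#> M" using nL nM x lm set_multI unfolding normalises_def by metis
  qed
  moreover have "subgroup (L <#> M) G"
    using subgroup_set_mult_if_normalises[OF sL sM normalises_mono[OF nL subgroup.subset[OF sM]]] .
  ultimately show ?thesis using normal_iff_normalises by blast
qed

lemma fin_index_normal_set_mult:
  assumes L: "L \<lhd> G" and M: "fin_index_normal M G"
  shows "fin_index_normal (L <#> M) G"
proof -
  have "M \<subseteq> L <#> M"
    using subset_set_mult_right[OF normal_imp_subgroup[OF L]]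
      subgroup.subset[OF fin_index_normal_subgroup[OF M]] by blast
  then show ?thesis
    using M normal_set_mult[OF L] finite_index_mono unfolding fin_index_normal_iff by blast
qed

lemma central_subgroup_normal:
  assumes L: "subgroup L G" "L \<subseteq> grp_center G"
  shows "L \<lhd> G"
proof (rule normal_invI[OF L(1)])
  fix x h assume x: "x \<in> carrier G" and h: "h \<in> L"
  have "h \<in> carrier G" "h \<otimes> x = x \<otimes> h" using h L(2) x unfolding grp_center_def by auto
  then have "x \<otimes> h \<otimes> inv x = h" using x by (metis m_assoc r_inv r_one inv_closed)
  then show "x \<otimes> h \<otimes> inv x \<in> L" using h by simp
qed

lemma fin_index_normal_preimage:
  assumes G2: "group G2" and f: "f \<in> hom G G2" and Q: "fin_index_normal Q G2"
  shows "fin_index_normal {x \<in> carrier G. f x \<in> Q} G"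
proof -
  interpret G2: group G2 by fact
  interpret f: group_hom G G2 f using G2 f by (simp add: group_hom_def group_hom_axioms_def is_group)
  have nQ: "Q \<lhd> G2" using Q unfolding fin_index_normal_def by blast
  then have sQ: "subgroup Q G2" by (rule normal_imp_subgroup)
  define N where "N = {x \<in> carrier G. f x \<in> Q}"
  have sN: "subgroup N G"
  proof (rule subgroupI)
    show "N \<subseteq> carrier G" "N \<noteq> {}" unfolding N_def using subgroup.one_closed[OF sQ] by force+
  qed (auto simp: N_def subgroup.m_closed[OF sQ] subgroup.m_inv_closed[OF sQ])
  have "normalises G (carrier G) N" unfolding normalises_def N_def
    using G2.normal_invE(2)[OF nQ] by auto
  moreover have "finite_index G (carrier G) N"
  proof (rule finite_index_if_finite_image[where f = "\<lambda>x. Q #>\<^bsub>G2\<^esub> f x"])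
    have "(\<lambda>x. Q #>\<^bsub>G2\<^esub> f x) ` carrier G \<subseteq> rcosets\<^bsub>G2\<^esub> Q"
      unfolding RCOSETS_def using f.hom_closed by blast
    then show "finite ((\<lambda>x. Q #>\<^bsub>G2\<^esub> f x) ` carrier G)"
      using Q unfolding fin_index_normal_def by (meson finite_subset)
  next
    fix x y assume "x \<in> carrier G" "y \<in> carrier G" "Q #>\<^bsub>G2\<^esub> f x = Q #>\<^bsub>G2\<^esub> f y"
    then show "x \<otimes> inv y \<in> N" unfolding N_def using G2.rcos_eq_iff[OF sQ] by simp
  qed (use sN subgroup.subset subgroup_self in auto)
  ultimately show ?thesis unfolding N_def[symmetric] fin_index_normal_iff
    using normal_iff_normalises[OF sN] by blast
qed

end

section \<open>Subgroups of bounded index in finitely generated groups\<close>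

definition finitely_generated :: "('a, 'm) monoid_scheme \<Rightarrow> 'a set \<Rightarrow> bool" where
  "finitely_generated G N \<longleftrightarrow> (\<exists>Y. finite Y \<and> Y \<subseteq> carrier G \<and> N = generate G Y)"

definition coset_action ::
  "('a, 'm) monoid_scheme \<Rightarrow> 'a set \<Rightarrow> 'a set \<Rightarrow> ('a set \<Rightarrow> nat) \<Rightarrow> 'a \<Rightarrow> nat \<Rightarrow> nat" where
  "coset_action G N W c n i = c (inv_into ((\<lambda>x. W #>\<^bsub>G\<^esub> x) ` N) c i #>\<^bsub>G\<^esub> n)"

context group
begin

lemma rcos_mult_in_rcosets:
  assumes N: "subgroup N G" and W: "W \<subseteq> carrier G" and C: "C \<in> (\<lambda>x. W #> x) ` N"
  shows "n \<in> N \<Longrightarrow> C #> n \<in> (\<lambda>x. W #> x) ` N" and "C \<subseteq> carrier G"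
proof -
  obtain y where y: "y \<in> N" "C = W #> y" using C by auto
  have yc: "y \<in> carrier G" using y subgroup.mem_carrier[OF N] by auto
  show "C \<subseteq> carrier G" using r_coset_subset_G[OF W yc] y by simp
  assume n: "n \<in> N"
  have "C #> n = W #> (y \<otimes> n)" using coset_mult_assoc[OF W yc] y n subgroup.mem_carrier[OF N] by simp
  then show "C #> n \<in> (\<lambda>x. W #> x) ` N" using subgroup.m_closed[OF N y(1) n] by blast
qed

lemma subgroup_in_rcosets_of:
  assumes "subgroup N G" "subgroup W G"
  shows "W \<in> (\<lambda>x. W #> x) ` N"
  using coset_mult_one[OF subgroup.subset[OF assms(2)]] subgroup.one_closed[OF assms(1)] by force

lemma coset_action:
  assumes N: "subgroup N G" and W: "W \<subseteq> carrier G"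
    and c: "bij_betw c ((\<lambda>x. W #> x) ` N) {0..<k}" and i: "i < k"
  shows "coset_action G N W c \<one> i = i"
    and "a \<in> N \<Longrightarrow> coset_action G N W c a i < k"
    and "a \<in> N \<Longrightarrow> b \<in> N \<Longrightarrow>
      coset_action G N W c (a \<otimes> b) i = coset_action G N W c b (coset_action G N W c a i)"
proof -
  let ?Cos = "(\<lambda>x. W #> x) ` N"
  have C: "inv_into ?Cos c i \<in> ?Cos" "c (inv_into ?Cos c i) = i"
    using bij_betw_apply[OF bij_betw_inv_into[OF c]] bij_betw_inv_into_right[OF c] i by auto
  have Cc: "inv_into ?Cos c i \<subseteq> carrier G" using rcos_mult_in_rcosets(2)[OF N W C(1)] .
  show "coset_action G N W c \<one> i = i" unfolding coset_action_def using Cc C(2) by simp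
  assume a: "a \<in> N"
  have Ca: "inv_into ?Cos c i #> a \<in> ?Cos" using rcos_mult_in_rcosets(1)[OF N W C(1) a] .
  show "coset_action G N W c a i < k" unfolding coset_action_def using bij_betw_apply[OF c Ca] by simp
  assume b: "b \<in> N"
  have "inv_into ?Cos c (coset_action G N W c a i) = inv_into ?Cos c i #> a"
    unfolding coset_action_def using bij_betw_inv_into_left[OF c Ca] .
  moreover have "inv_into ?Cos c i #> (a \<otimes> b) = (inv_into ?Cos c i #> a) #> b"
    using coset_mult_assoc[OF Cc] a b subgroup.mem_carrier[OF N] by simp
  ultimately show "coset_action G N W c (a \<otimes> b) i = coset_action G N W c b (coset_action G N W c a i)"
    unfolding coset_action_def by simp
qed

lemma mem_iff_coset_action_fixes:
  assumes N: "subgroup N G" and W: "subgroup W G" "W \<subseteq> N"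
    and c: "bij_betw c ((\<lambda>x. W #> x) ` N) {0..<k}" and n: "n \<in> N"
  shows "n \<in> W \<longleftrightarrow> coset_action G N W c n (c W) = c W"
proof -
  let ?Cos = "(\<lambda>x. W #> x) ` N"
  have WC: "W \<in> ?Cos" using subgroup_in_rcosets_of[OF N W(1)] .
  have WnC: "W #> n \<in> ?Cos" using rcos_mult_in_rcosets(1)[OF N subgroup.subset[OF W(1)] WC n] .
  have "coset_action G N W c n (c W) = c (W #> n)"
    unfolding coset_action_def using bij_betw_inv_into_left[OF c WC] by simp
  moreover have "c (W #> n) = c W \<longleftrightarrow> W #> n = W"
    using inj_on_eq_iff[OF bij_betw_imp_inj_on[OF c] WnC WC] .
  ultimately show ?thesis using rcos_eq_self_iff[OF W(1)] subgroup.mem_carrier[OF N n] by simp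
qed

lemma coset_action_eq_on_generate:
  assumes Y: "Y \<subseteq> carrier G" and N: "N = generate G Y"
    and W1: "W1 \<subseteq> carrier G" and c1: "bij_betw c1 ((\<lambda>x. W1 #> x) ` N) {0..<k}"
    and W2: "W2 \<subseteq> carrier G" and c2: "bij_betw c2 ((\<lambda>x. W2 #> x) ` N) {0..<k}"
    and agree: "\<And>y i. y \<in> Y \<union> m_inv G ` Y \<Longrightarrow> i < k \<Longrightarrow>
      coset_action G N W1 c1 y i = coset_action G N W2 c2 y i"
  shows "n \<in> N \<Longrightarrow> i < k \<Longrightarrow> coset_action G N W1 c1 n i = coset_action G N W2 c2 n i"
proof -
  have sN: "subgroup N G" unfolding N using generate_is_subgroup[OF Y] .
  note act1 = coset_action[OF sN W1 c1] and act2 = coset_action[OF sN W2 c2]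
  have "\<forall>i<k. coset_action G N W1 c1 n i = coset_action G N W2 c2 n i" if "n \<in> generate G Y" for n
    using that
  proof (induction n rule: generate.induct)
    case one
    then show ?case using act1(1) act2(1) by simp
  next
    case (incl y)
    then show ?case using agree by blast
  next
    case (inv y)
    then show ?case using agree by blast
  next
    case (eng a b)
    show ?case
    proof (intro allI impI)
      fix i assume i: "i < k"
      have ab: "a \<in> N" "b \<in> N" using eng.hyps unfolding N .
      have "coset_action G N W1 c1 (a \<otimes> b) i = coset_action G N W1 c1 b (coset_action G N W1 c1 a i)"
        using act1(3)[OF i ab] .
      also have "\<dots> = coset_action G N W2 c2 b (coset_action G N W2 c2 a i)"
        using eng.IH act1(2)[OF i ab(1)] i by simp
      also have "\<dots> = coset_action G N W2 c2 (a \<otimes> b) i" using act2(3)[OF i ab] by simp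
      finally show "coset_action G N W1 c1 (a \<otimes> b) i = coset_action G N W2 c2 (a \<otimes> b) i" .
    qed
  qed
  then show "n \<in> N \<Longrightarrow> i < k \<Longrightarrow> coset_action G N W1 c1 n i = coset_action G N W2 c2 n i"
    unfolding N by blast
qed

lemma subgroup_eq_if_coset_actions_agree:
  assumes Y: "Y \<subseteq> carrier G" "N = generate G Y"
    and W1: "subgroup W1 G" "W1 \<subseteq> N" and c1: "bij_betw c1 ((\<lambda>x. W1 #> x) ` N) {0..<k}"
    and W2: "subgroup W2 G" "W2 \<subseteq> N" and c2: "bij_betw c2 ((\<lambda>x. W2 #> x) ` N) {0..<k}"
    and agree: "\<And>y i. y \<in> Y \<union> m_inv G ` Y \<Longrightarrow> i < k \<Longrightarrow>
      coset_action G N W1 c1 y i = coset_action G N W2 c2 y i"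
    and label: "c1 W1 = c2 W2"
  shows "W1 = W2"
proof -
  have N: "subgroup N G" unfolding Y(2) using generate_is_subgroup[OF Y(1)] .
  have "c1 W1 < k" using bij_betw_apply[OF c1 subgroup_in_rcosets_of[OF N W1(1)]] by simp
  then have "coset_action G N W1 c1 n (c1 W1) = coset_action G N W2 c2 n (c2 W2)" if "n \<in> N" for n
    using coset_action_eq_on_generate[OF Y subgroup.subset[OF W1(1)] c1
        subgroup.subset[OF W2(1)] c2 agree that] label by simp
  then have "n \<in> W1 \<longleftrightarrow> n \<in> W2" if "n \<in> N" for n
    using mem_iff_coset_action_fixes[OF N W1 c1 that] mem_iff_coset_action_fixes[OF N W2 c2 that]
      label that by simp
  then show "W1 = W2" using W1(2) W2(2) by blast
qed

text \<open>A subgroup of index \<open>k\<close> is recovered from the permutation action of the generators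
  and their inverses on a labelling of its cosets by \<open>{0..<k}\<close>, together with the label of
  the subgroup itself; there are only finitely many such data.\<close>

lemma finite_subgroups_of_index:
  assumes "finitely_generated G N"
  shows "finite {W. subgroup W G \<and> W \<subseteq> N \<and> finite ((\<lambda>x. W #> x) ` N) \<and> card ((\<lambda>x. W #> x) ` N) = k}"
    (is "finite ?Fam")
proof -
  obtain Y where Y: "finite Y" "Y \<subseteq> carrier G" "N = generate G Y"
    using assms unfolding finitely_generated_def by blast
  have N: "subgroup N G" unfolding Y(3) using generate_is_subgroup[OF Y(2)] .
  define lab where "lab W = (SOME c. bij_betw c ((\<lambda>x. W #> x) ` N) {0..<k})" for W
  have lab: "bij_betw (lab W) ((\<lambda>x. W #> x) ` N) {0..<k}" if "W \<in> ?Fam" for W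
  proof -
    have "finite ((\<lambda>x. W #> x) ` N)" "card ((\<lambda>x. W #> x) ` N) = k" using that by auto
    then have "\<exists>c. bij_betw c ((\<lambda>x. W #> x) ` N) {0..<k}" using ex_bij_betw_finite_nat by metis
    then show ?thesis unfolding lab_def by (rule someI_ex)
  qed
  define code where
    "code W = (lab W W, \<lambda>y\<in>Y \<union> m_inv G ` Y. \<lambda>i\<in>{0..<k}. coset_action G N W (lab W) y i)" for W
  have YN: "Y \<union> m_inv G ` Y \<subseteq> N"
    unfolding Y(3) using generate.incl[of _ Y G] generate.inv[of _ Y G] by blast
  have "code W \<in> {0..<k} \<times> ((Y \<union> m_inv G ` Y) \<rightarrow>\<^sub>E ({0..<k} \<rightarrow>\<^sub>E {0..<k}))"
    if W: "W \<in> ?Fam" for W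
  proof -
    have sW: "subgroup W G" using W by simp
    have "lab W W \<in> {0..<k}" using bij_betw_apply[OF lab[OF W] subgroup_in_rcosets_of[OF N sW]] .
    moreover have "coset_action G N W (lab W) y i < k" if "y \<in> N" "i < k" for y i
      using coset_action(2)[OF N subgroup.subset[OF sW] lab[OF W] that(2,1)] .
    ultimately show ?thesis unfolding code_def using YN by auto
  qed
  then have "code ` ?Fam \<subseteq> {0..<k} \<times> ((Y \<union> m_inv G ` Y) \<rightarrow>\<^sub>E ({0..<k} \<rightarrow>\<^sub>E {0..<k}))"
    by (rule image_subsetI)
  moreover have "inj_on code ?Fam"
  proof (rule inj_onI)
    fix W1 W2 assume W1: "W1 \<in> ?Fam" and W2: "W2 \<in> ?Fam" and eq: "code W1 = code W2"
    have "coset_action G N W1 (lab W1) y i = coset_action G N W2 (lab W2) y i"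
      if "y \<in> Y \<union> m_inv G ` Y" "i < k" for y i
      using fun_cong[OF fun_cong[OF arg_cong[where f = snd, OF eq]], of y i] that
      unfolding code_def by simp
    moreover have "lab W1 W1 = lab W2 W2" using eq unfolding code_def by simp
    ultimately show "W1 = W2"
      using subgroup_eq_if_coset_actions_agree[OF Y(2,3) _ _ lab[OF W1] _ _ lab[OF W2]] W1 W2 by blast
  qed
  moreover have "finite ({0..<k} \<times> ((Y \<union> m_inv G ` Y) \<rightarrow>\<^sub>E ({0..<k} \<rightarrow>\<^sub>E {0..<k})))"
    using Y(1) by (simp add: finite_PiE)
  ultimately show ?thesis using inj_on_finite by blast
qed

lemma conj_image_eq:
  assumes S: "subgroup S G" and N: "normalises G S N" and s: "s \<in> S" and Nc: "N \<subseteq> carrier G"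
  shows "(\<lambda>x. s \<otimes> x \<otimes> inv s) ` N = N"
proof (intro equalityI subsetI)
  fix y assume "y \<in> (\<lambda>x. s \<otimes> x \<otimes> inv s) ` N"
  then show "y \<in> N" using N s unfolding normalises_def by blast
next
  fix y assume y: "y \<in> N"
  have sc: "s \<in> carrier G" using subgroup.mem_carrier[OF S s] .
  have "inv s \<otimes> y \<otimes> inv (inv s) \<in> N"
    using N subgroup.m_inv_closed[OF S s] y unfolding normalises_def by blast
  moreover have "y = s \<otimes> (inv s \<otimes> y \<otimes> inv (inv s)) \<otimes> inv s" using sc y Nc by (auto simp: m_assoc)
  ultimately show "y \<in> (\<lambda>x. s \<otimes> x \<otimes> inv s) ` N" by blast
qed

lemma subgroup_conj_preimage:
  assumes s: "s \<in> carrier G" and N: "subgroup N G" and V: "subgroup V G"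
  shows "subgroup {x \<in> N. s \<otimes> x \<otimes> inv s \<in> V} G"
proof (rule subgroupI)
  show "{x \<in> N. s \<otimes> x \<otimes> inv s \<in> V} \<subseteq> carrier G" using subgroup.subset[OF N] by blast
  show "{x \<in> N. s \<otimes> x \<otimes> inv s \<in> V} \<noteq> {}"
    using s subgroup.one_closed[OF N] subgroup.one_closed[OF V] by force
next
  fix a assume a: "a \<in> {x \<in> N. s \<otimes> x \<otimes> inv s \<in> V}"
  have "s \<otimes> inv a \<otimes> inv s = inv (s \<otimes> a \<otimes> inv s)"
    using a s subgroup.mem_carrier[OF N] by (simp add: m_assoc inv_mult_group)
  then show "inv a \<in> {x \<in> N. s \<otimes> x \<otimes> inv s \<in> V}"
    using a subgroup.m_inv_closed[OF V] subgroup.m_inv_closed[OF N] by simp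
next
  fix a b assume ab: "a \<in> {x \<in> N. s \<otimes> x \<otimes> inv s \<in> V}" "b \<in> {x \<in> N. s \<otimes> x \<otimes> inv s \<in> V}"
  have "s \<otimes> (a \<otimes> b) \<otimes> inv s = (s \<otimes> a \<otimes> inv s) \<otimes> (s \<otimes> b \<otimes> inv s)"
    using ab s subgroup.mem_carrier[OF N] by (simp add: m_assoc)
  then show "a \<otimes> b \<in> {x \<in> N. s \<otimes> x \<otimes> inv s \<in> V}"
    using ab subgroup.m_closed[OF N] subgroup.m_closed[OF V] by auto
qed

lemma rcosets_conj_preimage:
  assumes S: "subgroup S G" and N: "subgroup N G" "normalises G S N" and s: "s \<in> S"
    and V: "subgroup V G" "V \<subseteq> N" "finite_index G N V"
  defines "C \<equiv> {x \<in> N. s \<otimes> x \<otimes> inv s \<in> V}"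
  shows "finite ((\<lambda>x. C #> x) ` N)" and "card ((\<lambda>x. C #> x) ` N) = card ((\<lambda>x. V #> x) ` N)"
proof -
  have sc: "s \<in> carrier G" using subgroup.mem_carrier[OF S s] .
  have Nc: "\<And>x. x \<in> N \<Longrightarrow> x \<in> carrier G" using subgroup.mem_carrier[OF N(1)] .
  have sgC: "subgroup C G" unfolding C_def using subgroup_conj_preimage[OF sc N(1) V(1)] .
  have same: "C #> x = C #> y \<longleftrightarrow> V #> (s \<otimes> x \<otimes> inv s) = V #> (s \<otimes> y \<otimes> inv s)"
    if x: "x \<in> N" and y: "y \<in> N" for x y
  proof -
    have "C #> x = C #> y \<longleftrightarrow> x \<otimes> inv y \<in> C" using rcos_eq_iff[OF sgC] x y Nc by blast
    also have "\<dots> \<longleftrightarrow> s \<otimes> (x \<otimes> inv y) \<otimes> inv s \<in> V"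
      unfolding C_def using subgroup.m_closed[OF N(1) x subgroup.m_inv_closed[OF N(1) y]] by simp
    also have "s \<otimes> (x \<otimes> inv y) \<otimes> inv s = (s \<otimes> x \<otimes> inv s) \<otimes> inv (s \<otimes> y \<otimes> inv s)"
      using sc x y Nc by (simp add: m_assoc inv_mult_group)
    also have "(\<dots> \<in> V) \<longleftrightarrow> V #> (s \<otimes> x \<otimes> inv s) = V #> (s \<otimes> y \<otimes> inv s)"
      using rcos_eq_iff[OF V(1)] sc x y Nc by simp
    finally show ?thesis .
  qed
  have "(\<lambda>x. V #> (s \<otimes> x \<otimes> inv s)) ` N = (\<lambda>x. V #> x) ` ((\<lambda>x. s \<otimes> x \<otimes> inv s) ` N)"
    by (simp add: image_image)
  also have "\<dots> = (\<lambda>x. V #> x) ` N" using conj_image_eq[OF S N(2) s subgroup.subset[OF N(1)]] by simp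
  finally have img: "(\<lambda>x. V #> (s \<otimes> x \<otimes> inv s)) ` N = (\<lambda>x. V #> x) ` N" .
  have "finite ((\<lambda>x. V #> x) ` N)" using finite_index_iff_finite_rcosets V N(1) by blast
  then show "finite ((\<lambda>x. C #> x) ` N)"
    unfolding img[symmetric] by (rule finite_image_factor) (simp add: same)
  have "card ((\<lambda>x. C #> x) ` N) = card ((\<lambda>x. V #> (s \<otimes> x \<otimes> inv s)) ` N)"
    by (rule card_image_factor) (simp add: same)
  then show "card ((\<lambda>x. C #> x) ` N) = card ((\<lambda>x. V #> x) ` N)" unfolding img .
qed

text \<open>The subgroups \<open>{x \<in> N. s x s\<inverse> \<in> V}\<close> all have the index of \<open>V\<close> in \<open>N\<close>, so only
  finitely many of them occur in the intersection defining the core.\<close>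

lemma finite_index_normal_core_fg:
  assumes S: "subgroup S G" and N: "subgroup N G" "N \<subseteq> S" "normalises G S N"
    and fg: "finitely_generated G N"
    and V: "subgroup V G" "V \<subseteq> N" "finite_index G N V"
  shows "finite_index G N (normal_core G S V)"
proof -
  define F where "F = (\<lambda>s. {x \<in> N. s \<otimes> x \<otimes> inv s \<in> V}) ` S"
  have conj: "subgroup C G" "C \<subseteq> N" "finite ((\<lambda>x. C #> x) ` N)"
      "card ((\<lambda>x. C #> x) ` N) = card ((\<lambda>x. V #> x) ` N)"
    if C: "C \<in> F" for C
  proof -
    obtain s where s: "s \<in> S" "C = {x \<in> N. s \<otimes> x \<otimes> inv s \<in> V}" using C unfolding F_def by blast
    then show "subgroup C G" "C \<subseteq> N" "finite ((\<lambda>x. C #> x) ` N)"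
      "card ((\<lambda>x. C #> x) ` N) = card ((\<lambda>x. V #> x) ` N)"
      using subgroup_conj_preimage[OF subgroup.mem_carrier[OF S s(1)] N(1) V(1)]
        rcosets_conj_preimage[OF S N(1,3) s(1) V] by auto
  qed
  have "F \<subseteq> {W. subgroup W G \<and> W \<subseteq> N \<and> finite ((\<lambda>x. W #> x) ` N)
                \<and> card ((\<lambda>x. W #> x) ` N) = card ((\<lambda>x. V #> x) ` N)}"
    using conj by blast
  then have "finite F" by (rule finite_subset[OF _ finite_subgroups_of_index[OF fg]])
  moreover have "subgroup C G \<and> C \<subseteq> N \<and> finite_index G N C" if "C \<in> F" for C
    using conj[OF that] finite_index_iff_finite_rcosets[OF _ N(1)] by blast
  ultimately have "finite_index G N (N \<inter> \<Inter>F)" using finite_index_Inter[OF _ N(1)] by blast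
  moreover have "N \<inter> \<Inter>F = normal_core G S V"
  proof (intro equalityI subsetI)
    fix x assume "x \<in> N \<inter> \<Inter>F"
    then show "x \<in> normal_core G S V" using N(2) unfolding F_def normal_core_def by blast
  next
    fix x assume x: "x \<in> normal_core G S V"
    then have "x \<in> N" using normal_core_subset_subgroup[OF S] V(2) by blast
    then show "x \<in> N \<inter> \<Inter>F" using x unfolding F_def normal_core_def by blast
  qed
  ultimately show ?thesis by simp
qed

end

section \<open>Polycyclic-by-finite groups are subgroup separable\<close>

definition subgroup_separable :: "('a, 'm) monoid_scheme \<Rightarrow> 'a set \<Rightarrow> bool" where
  "subgroup_separable G S \<longleftrightarrow> (\<forall>H g. subgroup H G \<longrightarrow> H \<subseteq> S \<longrightarrow> g \<in> S \<longrightarrow> g \<notin> H \<longrightarrow>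
      (\<exists>U. subgroup U G \<and> H \<subseteq> U \<and> U \<subseteq> S \<and> finite_index G S U \<and> g \<notin> U))"

definition centraliser_mod :: "('a, 'm) monoid_scheme \<Rightarrow> 'a set \<Rightarrow> 'a set \<Rightarrow> 'a set \<Rightarrow> 'a set" where
  "centraliser_mod G S N W =
     {s \<in> S. \<forall>n\<in>N. s \<otimes>\<^bsub>G\<^esub> n \<otimes>\<^bsub>G\<^esub> inv\<^bsub>G\<^esub> s \<otimes>\<^bsub>G\<^esub> inv\<^bsub>G\<^esub> n \<in> W}"

context group
begin

lemma finite_index_if_contains_power:
  assumes S: "subgroup S G" and P: "subgroup P G" "P \<subseteq> S" and NP: "N \<subseteq> P"
    and t: "t \<in> S" and cyc: "\<And>x. x \<in> S \<Longrightarrow> \<exists>k::int. x \<otimes> inv (t [^] k) \<in> N"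
    and m: "(m::int) \<noteq> 0" "t [^] m \<in> P"
  shows "finite_index G S P"
  unfolding finite_index_def
proof (intro exI conjI)
  have tc: "t \<in> carrier G" using t subgroup.mem_carrier[OF S] by blast
  have tm: "t [^] \<bar>m\<bar> \<in> P"
    using m(2) subgroup.m_inv_closed[OF P(1) m(2)] int_pow_neg[OF tc, of m] by (cases "m > 0") auto
  define F where "F = (\<lambda>j::int. t [^] j) ` {0..<\<bar>m\<bar>}"
  show "finite F" unfolding F_def by simp
  show "F \<subseteq> S" unfolding F_def using subgroup_int_pow_closed[OF S t] by blast
  show "S \<subseteq> P <#> F"
  proof
    fix x assume x: "x \<in> S"
    obtain k :: int where k: "x \<otimes> inv (t [^] k) \<in> N" using cyc[OF x] by blast
    define q r where "q = k div \<bar>m\<bar>" and "r = k mod \<bar>m\<bar>"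
    have "t [^] k = t [^] (\<bar>m\<bar> * q) \<otimes> t [^] r"
      unfolding q_def r_def using int_pow_mult[OF tc] by (metis div_mult_mod_eq mult.commute)
    then have tk: "t [^] k = (t [^] \<bar>m\<bar>) [^] q \<otimes> t [^] r" using int_pow_pow[OF tc] by simp
    have xc: "x \<in> carrier G" using x subgroup.mem_carrier[OF S] by blast
    have "x = ((x \<otimes> inv (t [^] k)) \<otimes> (t [^] \<bar>m\<bar>) [^] q) \<otimes> t [^] r"
      unfolding tk using xc tc by (simp add: m_assoc inv_mult_group)
    moreover have "(x \<otimes> inv (t [^] k)) \<otimes> (t [^] \<bar>m\<bar>) [^] q \<in> P"
      using subgroup.m_closed[OF P(1)] k NP subgroup_int_pow_closed[OF P(1) tm] by blast
    moreover have "t [^] r \<in> F" unfolding F_def r_def using m(1) by simp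
    ultimately show "x \<in> P <#> F" using set_multI by metis
  qed
qed

text \<open>By separability of \<open>N\<close>, the part of \<open>g\<close> lying in \<open>N\<close> is separated from \<open>H \<inter> N\<close> by a
  finite-index subgroup of \<open>N\<close>, whose core in \<open>S\<close> still separates \<open>g\<close> from \<open>H\<close>.\<close>

lemma separating_normal_core:
  assumes S: "subgroup S G" and N: "subgroup N G" "N \<subseteq> S" "normalises G S N" "subgroup_separable G N"
    and cores: "\<And>V. subgroup V G \<Longrightarrow> V \<subseteq> N \<Longrightarrow> finite_index G N V \<Longrightarrow>
                   finite_index G N (normal_core G S V)"
    and H: "subgroup H G" "H \<subseteq> S" and g: "g \<in> S" "g \<notin> H"
  obtains W where "subgroup W G" "W \<subseteq> N" "normalises G S W" "finite_index G N W" "g \<notin> W <#> H"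
proof (cases "g \<in> N <#> H")
  case False
  then show ?thesis using that N(1,3) finite_index_refl[OF N(1)] by blast
next
  case True
  then obtain n h where nh: "n \<in> N" "h \<in> H" "g = n \<otimes> h" using mem_set_mult_iff by blast
  have "n \<notin> H" using nh g(2) subgroup.m_closed[OF H(1)] by blast
  then obtain V where V: "subgroup V G" "H \<inter> N \<subseteq> V" "V \<subseteq> N" "finite_index G N V" "n \<notin> V"
    using N(4) subgroups_Inter_pair[OF H(1) N(1)] nh(1) unfolding subgroup_separable_def
    by (metis Int_iff inf_le2)
  define W where "W = normal_core G S V"
  have W: "subgroup W G" "W \<subseteq> V" "normalises G S W"
    unfolding W_def using normal_core_subgroup[OF S V(1)] normal_core_subset_subgroup[OF S]
      normalises_normal_core[OF S] by auto
  have "g \<notin> W <#> H"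
  proof
    assume "g \<in> W <#> H"
    then obtain w h' where wh: "w \<in> W" "h' \<in> H" "n \<otimes> h = w \<otimes> h'" using mem_set_mult_iff nh(3) by blast
    have c: "n \<in> carrier G" "h \<in> carrier G" "h' \<in> carrier G" "w \<in> carrier G"
      using nh wh W(2) V(3) subgroup.mem_carrier[OF N(1)] subgroup.mem_carrier[OF H(1)] by auto
    have n: "n = w \<otimes> (h' \<otimes> inv h)"
      using c wh(3) by (metis inv_solve_right' m_assoc inv_closed m_closed)
    then have "h' \<otimes> inv h = inv w \<otimes> n" using c by simp
    then have "h' \<otimes> inv h \<in> H \<inter> N"
      using subgroup.m_closed subgroup.m_inv_closed H(1) N(1) wh nh W(2) V(3) by (metis IntI subsetD)
    then show False using V(2,5) W(2) wh(1) n subgroup.m_closed[OF V(1)] by blast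
  qed
  moreover have "finite_index G N W" unfolding W_def using cores V(1,3,4) .
  ultimately show ?thesis using that W V(3) by blast
qed

lemma subgroup_separable_finite_index_extension:
  assumes S: "subgroup S G"
    and N: "subgroup N G" "N \<subseteq> S" "normalises G S N" "finite_index G S N" "subgroup_separable G N"
  shows "subgroup_separable G S"
  unfolding subgroup_separable_def
proof (intro allI impI)
  fix H g assume H: "subgroup H G" "H \<subseteq> S" and g: "g \<in> S" "g \<notin> H"
  have "finite_index G N (normal_core G S V)"
    if V: "subgroup V G" "V \<subseteq> N" "finite_index G N V" for V
  proof -
    have "finite_index G S V" using finite_index_trans[OF S N(2,4) V(3) subgroup.subset[OF V(1)]] .
    then have "finite_index G S (normal_core G S V)"
      using finite_index_normal_core[OF S V(1)] V(2) N(2) by blast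
    then have "finite_index G N (N \<inter> normal_core G S V)"
      using finite_index_restrict[OF S normal_core_subgroup[OF S V(1)] normal_core_subset _ N(1,2)]
      by blast
    moreover have "N \<inter> normal_core G S V = normal_core G S V"
      using normal_core_subset_subgroup[OF S, of V] V(2) by blast
    ultimately show ?thesis by simp
  qed
  then obtain W where W: "subgroup W G" "W \<subseteq> N" "normalises G S W" "finite_index G N W" "g \<notin> W <#> H"
    using separating_normal_core[OF S N(1,2,3,5) _ H g] by blast
  have "subgroup (W <#> H) G"
    using subgroup_set_mult_if_normalises[OF W(1) H(1) normalises_mono[OF W(3) H(2)]] .
  moreover have "H \<subseteq> W <#> H" using subset_set_mult_right[OF W(1) subgroup.subset[OF H(1)]] .
  moreover have "W <#> H \<subseteq> S" using set_mult_subset_subgroup[OF S] W(2) N(2) H(2) by blast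
  moreover have "finite_index G S (W <#> H)"
    using finite_index_mono[OF subset_set_mult_left[OF H(1) subgroup.subset[OF W(1)]]
        finite_index_trans[OF S N(2,4) W(4) subgroup.subset[OF W(1)]]] .
  ultimately show "\<exists>U. subgroup U G \<and> H \<subseteq> U \<and> U \<subseteq> S \<and> finite_index G S U \<and> g \<notin> U"
    using W(5) by blast
qed

lemma subgroup_centraliser_mod:
  assumes S: "subgroup S G" and N: "subgroup N G" "normalises G S N"
    and W: "subgroup W G" "normalises G S W"
  shows "subgroup (centraliser_mod G S N W) G"
proof -
  define T where "T = centraliser_mod G S N W"
  have Sc: "\<And>x. x \<in> S \<Longrightarrow> x \<in> carrier G" using subgroup.mem_carrier[OF S] .
  have Nc: "\<And>x. x \<in> N \<Longrightarrow> x \<in> carrier G" using subgroup.mem_carrier[OF N(1)] .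
  have conjN: "\<And>s n. s \<in> S \<Longrightarrow> n \<in> N \<Longrightarrow> s \<otimes> n \<otimes> inv s \<in> N" using N(2) unfolding normalises_def by blast
  have conjW: "\<And>s w. s \<in> S \<Longrightarrow> w \<in> W \<Longrightarrow> s \<otimes> w \<otimes> inv s \<in> W" using W(2) unfolding normalises_def by blast
  have TS: "T \<subseteq> S" unfolding T_def centraliser_mod_def by blast
  have "subgroup T G"
  proof (rule subgroupI)
    show "T \<subseteq> carrier G" using TS Sc by blast
    have "\<one> \<in> T" unfolding T_def centraliser_mod_def
      using subgroup.one_closed[OF S] subgroup.one_closed[OF W(1)] Nc by simp
    then show "T \<noteq> {}" by blast
  next
    fix s assume s: "s \<in> T"
    then have sS: "s \<in> S" "inv s \<in> S" unfolding T_def centraliser_mod_def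
      using subgroup.m_inv_closed[OF S] by auto
    have "inv s \<otimes> n \<otimes> inv (inv s) \<otimes> inv n \<in> W" if n: "n \<in> N" for n
    proof -
      define m where "m = inv s \<otimes> n \<otimes> inv (inv s)"
      have mN: "m \<in> N" unfolding m_def using conjN[OF sS(2) n] .
      have "n \<otimes> inv m = s \<otimes> m \<otimes> inv s \<otimes> inv m"
        unfolding m_def using Sc[OF sS(1)] Nc[OF n] by (simp add: m_assoc)
      then have "n \<otimes> inv m \<in> W" using s mN unfolding T_def centraliser_mod_def by simp
      then have "inv (n \<otimes> inv m) \<in> W" by (rule subgroup.m_inv_closed[OF W(1)])
      moreover have "inv (n \<otimes> inv m) = m \<otimes> inv n" using Nc[OF n] Nc[OF mN] by (simp add: inv_mult_group)
      ultimately show ?thesis unfolding m_def by simp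
    qed
    then show "inv s \<in> T" unfolding T_def centraliser_mod_def using sS(2) by blast
  next
    fix s1 s2 assume s: "s1 \<in> T" "s2 \<in> T"
    have "s1 \<otimes> s2 \<otimes> n \<otimes> inv (s1 \<otimes> s2) \<otimes> inv n \<in> W" if n: "n \<in> N" for n
    proof -
      have "(s1 \<otimes> (s2 \<otimes> n \<otimes> inv s2 \<otimes> inv n) \<otimes> inv s1) \<otimes> (s1 \<otimes> n \<otimes> inv s1 \<otimes> inv n) \<in> W"
        using s n conjW subgroup.m_closed[OF W(1)] unfolding T_def centraliser_mod_def by blast
      moreover have "(s1 \<otimes> (s2 \<otimes> n \<otimes> inv s2 \<otimes> inv n) \<otimes> inv s1) \<otimes> (s1 \<otimes> n \<otimes> inv s1 \<otimes> inv n)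
          = s1 \<otimes> s2 \<otimes> n \<otimes> inv (s1 \<otimes> s2) \<otimes> inv n"
        using s n Sc Nc unfolding T_def centraliser_mod_def by (simp add: m_assoc inv_mult_group)
      ultimately show ?thesis by simp
    qed
    then show "s1 \<otimes> s2 \<in> T" using s subgroup.m_closed[OF S] unfolding T_def centraliser_mod_def by blast
  qed
  then show ?thesis unfolding T_def .
qed

lemma finite_index_centraliser_mod:
  assumes S: "subgroup S G" and N: "subgroup N G" "normalises G S N"
    and W: "subgroup W G" "W \<subseteq> N" "normalises G S W" "finite_index G N W"
  shows "finite_index G S (centraliser_mod G S N W)"
proof -
  define T where "T = centraliser_mod G S N W"
  have Sc: "\<And>x. x \<in> S \<Longrightarrow> x \<in> carrier G" using subgroup.mem_carrier[OF S] .
  have Nc: "\<And>x. x \<in> N \<Longrightarrow> x \<in> carrier G" using subgroup.mem_carrier[OF N(1)] .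
  have conjN: "\<And>s n. s \<in> S \<Longrightarrow> n \<in> N \<Longrightarrow> s \<otimes> n \<otimes> inv s \<in> N" using N(2) unfolding normalises_def by blast
  have conjW: "\<And>s w. s \<in> S \<Longrightarrow> w \<in> W \<Longrightarrow> s \<otimes> w \<otimes> inv s \<in> W" using W(3) unfolding normalises_def by blast
  obtain R where R: "finite R" "R \<subseteq> N" "N \<subseteq> W <#> R" using W(4) unfolding finite_index_def by blast
  have conj_rcos: "W #> (x \<otimes> (w \<otimes> r) \<otimes> inv x) = W #> (x \<otimes> r \<otimes> inv x)"
    if "x \<in> S" "w \<in> W" "r \<in> N" for x w r
  proof -
    have "(x \<otimes> (w \<otimes> r) \<otimes> inv x) \<otimes> inv (x \<otimes> r \<otimes> inv x) = x \<otimes> w \<otimes> inv x"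
      using that Sc Nc W(2) by (simp add: m_assoc inv_mult_group subsetD)
    then show ?thesis using rcos_eq_iff[OF W(1)] conjW that Sc Nc W(2) by (simp add: subsetD)
  qed
  have "finite_index G S T"
  proof (rule finite_index_if_finite_image[where f = "\<lambda>s. \<lambda>r\<in>R. W #> (s \<otimes> r \<otimes> inv s)"])
    have "(\<lambda>r\<in>R. W #> (s \<otimes> r \<otimes> inv s)) \<in> R \<rightarrow>\<^sub>E (\<lambda>x. W #> x) ` N" if "s \<in> S" for s
      using conjN[OF that] R(2) by auto
    then have "(\<lambda>s. \<lambda>r\<in>R. W #> (s \<otimes> r \<otimes> inv s)) ` S \<subseteq> R \<rightarrow>\<^sub>E (\<lambda>x. W #> x) ` N"
      by (rule image_subsetI)
    moreover have "finite (R \<rightarrow>\<^sub>E (\<lambda>x. W #> x) ` N)"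
      using R(1) finite_index_iff_finite_rcosets[OF W(1) N(1) W(2)] W(4) by (simp add: finite_PiE)
    ultimately show "finite ((\<lambda>s. \<lambda>r\<in>R. W #> (s \<otimes> r \<otimes> inv s)) ` S)" by (rule finite_subset)
  next
    fix s s' assume s: "s \<in> S" "s' \<in> S"
      and eq: "(\<lambda>r\<in>R. W #> (s \<otimes> r \<otimes> inv s)) = (\<lambda>r\<in>R. W #> (s' \<otimes> r \<otimes> inv s'))"
    have "(s \<otimes> inv s') \<otimes> n \<otimes> inv (s \<otimes> inv s') \<otimes> inv n \<in> W" if n: "n \<in> N" for n
    proof -
      define m where "m = inv s' \<otimes> n \<otimes> inv (inv s')"
      have "m \<in> N" unfolding m_def using conjN[OF subgroup.m_inv_closed[OF S s(2)] n] .
      then obtain w r where wr: "w \<in> W" "r \<in> R" "m = w \<otimes> r" using R(3) mem_set_mult_iff by blast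
      have "W #> (s \<otimes> m \<otimes> inv s) = W #> (s \<otimes> r \<otimes> inv s)"
        unfolding wr(3) using conj_rcos[OF s(1) wr(1)] wr(2) R(2) by blast
      also have "\<dots> = W #> (s' \<otimes> r \<otimes> inv s')" using fun_cong[OF eq, of r] wr(2) by simp
      also have "\<dots> = W #> (s' \<otimes> m \<otimes> inv s')"
        unfolding wr(3) using conj_rcos[OF s(2) wr(1)] wr(2) R(2) by auto
      also have "s' \<otimes> m \<otimes> inv s' = n" unfolding m_def using Sc[OF s(2)] Nc[OF n] by (simp add: m_assoc)
      finally have "(s \<otimes> m \<otimes> inv s) \<otimes> inv n \<in> W"
        using rcos_eq_iff[OF W(1)] Sc[OF s(1)] Nc[OF n] Nc[OF \<open>m \<in> N\<close>] by simp
      then show ?thesis unfolding m_def using Sc s Nc[OF n] by (simp add: m_assoc inv_mult_group)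
    qed
    then show "s \<otimes> inv s' \<in> T"
      unfolding T_def centraliser_mod_def
      using s subgroup.m_closed[OF S] subgroup.m_inv_closed[OF S] by blast
  qed (use subgroup_centraliser_mod[OF S N W(1,3)] S in \<open>auto simp: T_def centraliser_mod_def\<close>)
  then show ?thesis unfolding T_def .
qed

lemma int_pow_exponent_unique:
  assumes N: "subgroup N G" and t: "t \<in> carrier G" and inf: "\<And>k::int. t [^] k \<in> N \<Longrightarrow> k = 0"
    and x: "x \<in> carrier G" "x \<otimes> inv (t [^] (a::int)) \<in> N" "x \<otimes> inv (t [^] (b::int)) \<in> N"
  shows "a = b"
proof -
  have "inv (x \<otimes> inv (t [^] a)) \<otimes> (x \<otimes> inv (t [^] b)) \<in> N"
    using x subgroup.m_closed[OF N] subgroup.m_inv_closed[OF N] by blast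
  moreover have "inv (x \<otimes> inv (t [^] a)) \<otimes> (x \<otimes> inv (t [^] b)) = t [^] (a - b)"
    using x(1) t by (simp add: inv_mult_group m_assoc int_pow_diff)
  ultimately show ?thesis using inf by fastforce
qed

lemma finite_index_set_mult_cyclic:
  assumes S: "subgroup S G" and N: "subgroup N G" "N \<subseteq> S" "normalises G S N"
    and t: "t \<in> S" and cyc: "\<And>x. x \<in> S \<Longrightarrow> \<exists>k::int. x \<otimes> inv (t [^] k) \<in> N"
    and W: "subgroup W G" "W \<subseteq> N" "normalises G S W" "finite_index G N W"
    and Q: "subgroup Q G" "Q \<subseteq> S" and m: "(m::int) \<noteq> 0" "t [^] m \<in> N <#> Q"
  shows "finite_index G S (W <#> Q)"
proof -
  have nQ: "normalises G Q N" "normalises G Q W" using N(3) W(3) Q(2) normalises_mono by auto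
  have NQ: "N <#> Q \<subseteq> S" using set_mult_subset_subgroup[OF S N(2) Q(2)] .
  have "finite_index G S (N <#> Q)"
    using finite_index_if_contains_power[OF S subgroup_set_mult_if_normalises[OF N(1) Q(1) nQ(1)] NQ
        subset_set_mult_left[OF Q(1) subgroup.subset[OF N(1)]] t cyc m] .
  moreover have "finite_index G (N <#> Q) (W <#> Q)"
    using finite_index_set_mult[OF N(1) W(1,2,4) Q(1) nQ] .
  moreover have "W <#> Q \<subseteq> carrier G"
    using setmult_subset_G[OF subgroup.subset subgroup.subset] W(1) Q(1) .
  ultimately show ?thesis by (rule finite_index_trans[OF S NQ])
qed

lemma power_in_set_mult_if_not_subset:
  assumes S: "subgroup S G" and N: "subgroup N G"
    and t: "t \<in> S" and cyc: "\<And>x. x \<in> S \<Longrightarrow> \<exists>k::int. x \<otimes> inv (t [^] k) \<in> N"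
    and H: "H \<subseteq> S" "h \<in> H" "h \<notin> N"
  obtains m :: int where "m \<noteq> 0" "t [^] m \<in> N <#> H"
proof -
  have c: "h \<in> carrier G" "t \<in> carrier G" using H(1,2) t subgroup.mem_carrier[OF S] by auto
  obtain m :: int where m: "h \<otimes> inv (t [^] m) \<in> N" using cyc H(1,2) by blast
  have "m \<noteq> 0" using m H(3) c by auto
  moreover have "inv (h \<otimes> inv (t [^] m)) \<otimes> h = t [^] m" using c by (simp add: inv_mult_group m_assoc)
  then have "t [^] m \<in> N <#> H" using set_multI[OF subgroup.m_inv_closed[OF N m] H(2)] by simp
  ultimately show ?thesis using that by blast
qed

lemma normalises_set_mult_centraliser_mod:
  assumes S: "subgroup S G" and N: "N \<subseteq> carrier G" and W: "subgroup W G" "normalises G S W"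
    and H: "H \<subseteq> N" and Q: "Q \<subseteq> centraliser_mod G S N W"
  shows "normalises G Q (W <#> H)"
  unfolding normalises_def
proof (intro ballI)
  fix q x assume q: "q \<in> Q" and "x \<in> W <#> H"
  then obtain w h where wh: "w \<in> W" "h \<in> H" "x = w \<otimes> h" using mem_set_mult_iff by blast
  have qS: "q \<in> S" "\<forall>n\<in>N. q \<otimes> n \<otimes> inv q \<otimes> inv n \<in> W" using q Q unfolding centraliser_mod_def by auto
  have c: "q \<in> carrier G" "w \<in> carrier G" "h \<in> carrier G"
    using qS(1) wh H N subgroup.mem_carrier[OF S] subgroup.mem_carrier[OF W(1)] by auto
  have "q \<otimes> x \<otimes> inv q = ((q \<otimes> w \<otimes> inv q) \<otimes> (q \<otimes> h \<otimes> inv q \<otimes> inv h)) \<otimes> h"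
    unfolding wh(3) using c by (simp add: m_assoc)
  moreover have "(q \<otimes> w \<otimes> inv q) \<otimes> (q \<otimes> h \<otimes> inv q \<otimes> inv h) \<in> W"
    using W(2) qS wh H subgroup.m_closed[OF W(1)] unfolding normalises_def by blast
  ultimately show "q \<otimes> x \<otimes> inv q \<in> W <#> H" using set_multI[OF _ wh(2)] by simp
qed

lemma not_in_set_mult_generate_power:
  assumes N: "subgroup N G" and t: "t \<in> carrier G" and inf: "\<And>k::int. t [^] k \<in> N \<Longrightarrow> k = 0"
    and P: "P \<subseteq> N" and g: "g \<in> carrier G" "g \<notin> P" "g \<otimes> inv (t [^] j) \<in> N" and r: "\<bar>j\<bar> < r"
  shows "g \<notin> P <#> generate G {t [^] (r::int)}"
proof
  assume "g \<in> P <#> generate G {t [^] r}"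
  then obtain x q where xq: "x \<in> P" "q \<in> generate G {t [^] r}" "g = x \<otimes> q"
    using mem_set_mult_iff by blast
  then obtain a :: int where "q = (t [^] r) [^] a" using generate_pow[OF int_pow_closed[OF t]] by auto
  then have x: "x \<in> P" "g = x \<otimes> (t [^] r) [^] a" using xq by simp_all
  have xc: "x \<in> carrier G" using subgroup.mem_carrier[OF N] x(1) P by blast
  have "g \<otimes> inv (t [^] (r * a)) = x" using x(2) xc t by (simp add: int_pow_pow m_assoc)
  then have "r * a = j" using int_pow_exponent_unique[OF N t inf g(1) _ g(3)] x(1) P by auto
  moreover have "r \<le> \<bar>r * a\<bar>" if "a \<noteq> 0"
  proof -
    have "\<bar>r\<bar> * 1 \<le> \<bar>r\<bar> * \<bar>a\<bar>" using that by (intro mult_left_mono) auto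
    then show ?thesis by (simp add: abs_mult)
  qed
  ultimately have "a = 0" using r by force
  then show False using x xc g(2) by simp
qed

text \<open>When \<open>H \<subseteq> N\<close>, the generator \<open>t\<close> is replaced by a power acting trivially on \<open>N / W\<close>, so
  that it normalises \<open>W H\<close>; the power is chosen large enough not to reach the coset of \<open>g\<close>.\<close>

lemma separating_subgroup_within_normal:
  assumes S: "subgroup S G" and N: "subgroup N G" "N \<subseteq> S" "normalises G S N"
    and t: "t \<in> S" and cyc: "\<And>x. x \<in> S \<Longrightarrow> \<exists>k::int. x \<otimes> inv (t [^] k) \<in> N"
    and inf: "\<And>k::int. t [^] k \<in> N \<Longrightarrow> k = 0"
    and W: "subgroup W G" "W \<subseteq> N" "normalises G S W" "finite_index G N W"
    and H: "subgroup H G" "H \<subseteq> N" and g: "g \<in> S" "g \<notin> W <#> H"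
  shows "\<exists>U. subgroup U G \<and> H \<subseteq> U \<and> U \<subseteq> S \<and> finite_index G S U \<and> g \<notin> U"
proof -
  have tc: "t \<in> carrier G" using subgroup.mem_carrier[OF S t] .
  obtain j :: int where j: "g \<otimes> inv (t [^] j) \<in> N" using cyc[OF g(1)] by blast
  define T where "T = centraliser_mod G S N W"
  have T: "subgroup T G" "T \<subseteq> S" "finite_index G S T"
    unfolding T_def
    using subgroup_centraliser_mod[OF S N(1,3) W(1,3)] finite_index_centraliser_mod[OF S N(1,3) W]
    by (auto simp: centraliser_mod_def)
  obtain r :: int where r: "\<bar>j\<bar> < r" "t [^] r \<in> T" using finite_index_power[OF S T t] by blast
  define Q where "Q = generate G {t [^] r}"
  have QT: "Q \<subseteq> T" unfolding Q_def using generate_subgroup_incl[OF _ T(1)] r(2) by blast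
  have Q: "subgroup Q G" "Q \<subseteq> S" "t [^] r \<in> Q"
    unfolding Q_def using generate_is_subgroup int_pow_closed[OF tc] QT T(2)
      generate.incl[of "t [^] r" "{t [^] r}" G] unfolding Q_def by auto
  have WH: "subgroup (W <#> H) G" "W <#> H \<subseteq> N"
    using H N(2) subgroup_set_mult_if_normalises[OF W(1) H(1) normalises_mono[OF W(3)]]
      set_mult_subset_subgroup[OF N(1) W(2) H(2)] by auto
  have "normalises G Q (W <#> H)"
    using normalises_set_mult_centraliser_mod[OF S subgroup.subset[OF N(1)] W(1,3) H(2)] QT
    unfolding T_def by blast
  then have U: "subgroup (W <#> H <#> Q) G" using subgroup_set_mult_if_normalises[OF WH(1) Q(1)] by blast
  have "t [^] r \<in> N <#> Q" using subset_set_mult_right[OF N(1) subgroup.subset[OF Q(1)]] Q(3) by blast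
  moreover have "r \<noteq> 0" using r(1) by linarith
  ultimately have "finite_index G S (W <#> Q)"
    using finite_index_set_mult_cyclic[OF S N t cyc W Q(1,2)] by blast
  moreover have "W <#> Q \<subseteq> W <#> H <#> Q"
    using mono_set_mult[OF subset_set_mult_left[OF H(1) subgroup.subset[OF W(1)]] order_refl] .
  ultimately have "finite_index G S (W <#> H <#> Q)" using finite_index_mono by blast
  moreover have "g \<notin> W <#> H <#> Q"
    unfolding Q_def using not_in_set_mult_generate_power[OF N(1) tc inf WH(2) _ g(2) j r(1)]
      subgroup.mem_carrier[OF S g(1)] by blast
  moreover have "H \<subseteq> W <#> H <#> Q"
    using subset_set_mult_right[OF W(1) subgroup.subset[OF H(1)]]
      subset_set_mult_left[OF Q(1) subgroup.subset[OF WH(1)]] by blast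
  moreover have "W <#> H <#> Q \<subseteq> S" using set_mult_subset_subgroup[OF S _ Q(2)] WH(2) N(2) by blast
  ultimately show ?thesis using U by blast
qed

lemma subgroup_separable_cyclic_extension:
  assumes S: "subgroup S G" and N: "subgroup N G" "N \<subseteq> S" "normalises G S N"
    and t: "t \<in> S" and cyc: "\<And>x. x \<in> S \<Longrightarrow> \<exists>k::int. x \<otimes> inv (t [^] k) \<in> N"
    and fg: "finitely_generated G N" and sep: "subgroup_separable G N"
  shows "subgroup_separable G S"
proof (cases "\<exists>k::int. k \<noteq> 0 \<and> t [^] k \<in> N")
  case True
  then have "finite_index G S N"
    using finite_index_if_contains_power[OF S N(1,2) order_refl t cyc] by blast
  then show ?thesis using subgroup_separable_finite_index_extension[OF S N _ sep] by blast
next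
  case False
  then have inf: "\<And>k::int. t [^] k \<in> N \<Longrightarrow> k = 0" by blast
  show ?thesis unfolding subgroup_separable_def
  proof (intro allI impI)
    fix H g assume H: "subgroup H G" "H \<subseteq> S" and g: "g \<in> S" "g \<notin> H"
    obtain W where W: "subgroup W G" "W \<subseteq> N" "normalises G S W" "finite_index G N W" "g \<notin> W <#> H"
      using separating_normal_core[OF S N sep finite_index_normal_core_fg[OF S N fg] H g] by blast
    show "\<exists>U. subgroup U G \<and> H \<subseteq> U \<and> U \<subseteq> S \<and> finite_index G S U \<and> g \<notin> U"
    proof (cases "H \<subseteq> N")
      case True
      then show ?thesis
        using separating_subgroup_within_normal[OF S N t cyc inf W(1-4) H(1) _ g(1) W(5)] by blast
    next
      case False
      then obtain h where "h \<in> H" "h \<notin> N" by blast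
      then obtain m :: int where "m \<noteq> 0" "t [^] m \<in> N <#> H"
        using power_in_set_mult_if_not_subset[OF S N(1) t cyc H(2)] by blast
      then have "finite_index G S (W <#> H)"
        using finite_index_set_mult_cyclic[OF S N t cyc W(1-4) H] by blast
      moreover have "subgroup (W <#> H) G"
        using subgroup_set_mult_if_normalises[OF W(1) H(1) normalises_mono[OF W(3) H(2)]] .
      moreover have "H \<subseteq> W <#> H" using subset_set_mult_right[OF W(1) subgroup.subset[OF H(1)]] .
      moreover have "W <#> H \<subseteq> S" using set_mult_subset_subgroup[OF S] W(2) N(2) H(2) by blast
      ultimately show ?thesis using W(5) by blast
    qed
  qed
qed

lemma finitely_generated_cyclic_extension:
  assumes S: "subgroup S G" and N: "N \<subseteq> S" "finitely_generated G N"
    and g: "g \<in> S" and cyc: "\<And>x. x \<in> S \<Longrightarrow> \<exists>k::int. x \<otimes> inv (g [^] k) \<in> N"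
  shows "finitely_generated G S"
proof -
  obtain Y where Y: "finite Y" "Y \<subseteq> carrier G" "N = generate G Y"
    using N(2) unfolding finitely_generated_def by blast
  have gc: "g \<in> carrier G" using subgroup.mem_carrier[OF S g] .
  have gY: "insert g Y \<subseteq> carrier G" using Y(2) gc by blast
  have "generate G (insert g Y) \<subseteq> S"
  proof (rule generate_subgroup_incl[OF _ S])
    show "insert g Y \<subseteq> S" using g N(1) generate.incl[of _ Y G] unfolding Y(3) by blast
  qed
  moreover have "S \<subseteq> generate G (insert g Y)"
  proof
    fix x assume x: "x \<in> S"
    obtain k :: int where k: "x \<otimes> inv (g [^] k) \<in> N" using cyc[OF x] by blast
    note sub = generate_is_subgroup[OF gY]
    have "x \<otimes> inv (g [^] k) \<in> generate G (insert g Y)" using k mono_generate[of Y "insert g Y"] Y(3)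
      by blast
    moreover have "g [^] k \<in> generate G (insert g Y)"
      using subgroup_int_pow_closed[OF sub generate.incl[of g "insert g Y" G]] by simp
    ultimately have "(x \<otimes> inv (g [^] k)) \<otimes> g [^] k \<in> generate G (insert g Y)"
      using subgroup.m_closed[OF sub] by blast
    then show "x \<in> generate G (insert g Y)" using subgroup.mem_carrier[OF S x] gc by (simp add: m_assoc)
  qed
  ultimately show ?thesis unfolding finitely_generated_def using Y(1) gY by blast
qed

lemma subgroup_separable_polycyclic_series:
  assumes Sn: "S n = {\<one>}"
    and step: "\<And>i. i < n \<Longrightarrow> subgroup (S i) G \<and> subgroup (S (Suc i)) G \<and> S (Suc i) \<subseteq> S i \<and>
        normalises G (S i) (S (Suc i)) \<and> (\<exists>g\<in>S i. \<forall>x\<in>S i. \<exists>k::int. x \<otimes> inv (g [^] k) \<in> S (Suc i))"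
  shows "subgroup_separable G (S 0) \<and> finitely_generated G (S 0)"
proof -
  have "subgroup_separable G (S i) \<and> finitely_generated G (S i)" if "i \<le> n" for i
    using that
  proof (induction rule: inc_induct)
    case base
    have "subgroup_separable G {\<one>}" unfolding subgroup_separable_def using subgroup.one_closed by blast
    moreover have "finitely_generated G {\<one>}" unfolding finitely_generated_def using generate_empty
      by auto
    ultimately show ?case using Sn by simp
  next
    case (step i)
    then have st: "subgroup (S i) G" "subgroup (S (Suc i)) G" "S (Suc i) \<subseteq> S i"
      "normalises G (S i) (S (Suc i))"
      using assms(2) by auto
    obtain g where "g \<in> S i" "\<And>x. x \<in> S i \<Longrightarrow> \<exists>k::int. x \<otimes> inv (g [^] k) \<in> S (Suc i)"
      using assms(2)[OF step(2)] by blast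
    then show ?case
      using subgroup_separable_cyclic_extension[OF st] finitely_generated_cyclic_extension[OF st(1,3)]
        step(3) by blast
  qed
  then show ?thesis by blast
qed

lemma polycyclic_subgroup_separable:
  assumes P: "subgroup P G" and pc: "polycyclic (G\<lparr>carrier := P\<rparr>)"
  shows "subgroup_separable G P"
proof -
  obtain n S where S0: "S 0 = P" and Sn: "S n = {\<one>}"
    and st: "\<And>i. i < n \<Longrightarrow> subgroup (S i) (G\<lparr>carrier := P\<rparr>) \<and> S (Suc i) \<lhd> G\<lparr>carrier := S i\<rparr> \<and>
        (\<exists>g\<in>S i. \<forall>x\<in>S i. \<exists>k::int.
           x \<otimes> inv\<^bsub>G\<lparr>carrier := P\<rparr>\<^esub> (g [^]\<^bsub>G\<lparr>carrier := P\<rparr>\<^esub> k) \<in> S (Suc i))"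
    using pc unfolding polycyclic_def by auto
  have "subgroup (S i) G \<and> subgroup (S (Suc i)) G \<and> S (Suc i) \<subseteq> S i \<and> normalises G (S i) (S (Suc i)) \<and>
      (\<exists>g\<in>S i. \<forall>x\<in>S i. \<exists>k::int. x \<otimes> inv (g [^] k) \<in> S (Suc i))" if i: "i < n" for i
  proof -
    have sgP: "subgroup (S i) (G\<lparr>carrier := P\<rparr>)" and nr: "S (Suc i) \<lhd> G\<lparr>carrier := S i\<rparr>"
      using st[OF i] by blast+
    have Si: "subgroup (S i) G" "S i \<subseteq> P" using incl_subgroup[OF P sgP] subgroup.subset[OF sgP] by auto
    have Ssi: "subgroup (S (Suc i)) G" "S (Suc i) \<subseteq> S i"
      using incl_subgroup[OF Si(1) normal_imp_subgroup[OF nr]]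
        subgroup.subset[OF normal_imp_subgroup[OF nr]] by auto
    have nrm: "normalises G (S i) (S (Suc i))"
      unfolding normalises_def using normal.inv_op_closed2[OF nr] m_inv_consistent[OF Si(1)] by simp
    obtain g where g: "g \<in> S i"
      "\<forall>x\<in>S i. \<exists>k::int. x \<otimes> inv\<^bsub>G\<lparr>carrier := P\<rparr>\<^esub> (g [^]\<^bsub>G\<lparr>carrier := P\<rparr>\<^esub> k) \<in> S (Suc i)"
      using st[OF i] by blast
    have "g [^]\<^bsub>G\<lparr>carrier := P\<rparr>\<^esub> k = g [^] k" "g [^] k \<in> P" for k :: int
      using int_pow_consistent[OF P] subgroup_int_pow_closed[OF P] g(1) Si(2) by auto
    then have "\<exists>g\<in>S i. \<forall>x\<in>S i. \<exists>k::int. x \<otimes> inv (g [^] k) \<in> S (Suc i)"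
      using g m_inv_consistent[OF P] by auto
    then show ?thesis using Si Ssi nrm by blast
  qed
  then show ?thesis using subgroup_separable_polycyclic_series[of S n, OF Sn] S0 by blast
qed

lemma polycyclic_by_finite_subgroup_separable:
  assumes "polycyclic_by_finite G"
  shows "subgroup_separable G (carrier G)"
proof -
  obtain P where P: "fin_index_normal P G" and pc: "polycyclic (G\<lparr>carrier := P\<rparr>)"
    using assms unfolding polycyclic_by_finite_def by blast
  have sP: "subgroup P G" using P normal_imp_subgroup unfolding fin_index_normal_def by blast
  show ?thesis
    using subgroup_separable_finite_index_extension[OF subgroup_self sP subgroup.subset[OF sP]]
      P polycyclic_subgroup_separable[OF sP pc]
        unfolding fin_index_normal_iff normal_iff_normalises[OF sP]
    by blast
qed

end

section \<open>Profinitely closed subgroups\<close>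

definition profinitely_closed :: "('a, 'm) monoid_scheme \<Rightarrow> 'a set \<Rightarrow> bool" where
  "profinitely_closed G H \<longleftrightarrow>
     (\<forall>a\<in>carrier G. a \<notin> H \<longrightarrow> (\<exists>N. fin_index_normal N G \<and> a \<notin> H <#>\<^bsub>G\<^esub> N))"

context group
begin

lemma subgroup_separable_imp_profinitely_closed:
  assumes "subgroup_separable G (carrier G)" and H: "subgroup H G"
  shows "profinitely_closed G H"
  unfolding profinitely_closed_def
proof (intro ballI impI)
  fix g assume g: "g \<in> carrier G" "g \<notin> H"
  obtain U where U: "subgroup U G" "H \<subseteq> U" "finite_index G (carrier G) U" "g \<notin> U"
    using assms g subgroup.subset[OF H] unfolding subgroup_separable_def by blast
  define M where "M = normal_core G (carrier G) U"
  have M: "subgroup M G" "M \<subseteq> U" "normalises G (carrier G) M"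
    unfolding M_def using normal_core_subgroup[OF subgroup_self U(1)]
      normal_core_subset_subgroup[OF subgroup_self] normalises_normal_core[OF subgroup_self] by auto
  have "fin_index_normal M G"
    unfolding fin_index_normal_iff M_def
    using finite_index_normal_core[OF subgroup_self U(1) subgroup.subset[OF U(1)] U(3)]
      normal_iff_normalises M unfolding M_def by blast
  moreover have "H <#> M \<subseteq> U" using set_mult_subset_subgroup[OF U(1) U(2)] M(2) by blast
  ultimately show "\<exists>N. fin_index_normal N G \<and> g \<notin> H <#> N" using U(4) by blast
qed

text \<open>If \<open>a\<close> is not central, some commutator \<open>[a, x]\<close> is nontrivial; a finite-index normal
  subgroup missing it also misses \<open>Z(G) a\<close>, since \<open>[z n, x] = [n, x]\<close> for central \<open>z\<close>.\<close>

lemma residually_finite_center_profinitely_closed: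
  assumes "residually_finite G"
  shows "profinitely_closed G (grp_center G)"
  unfolding profinitely_closed_def
proof (intro ballI impI)
  fix a assume a: "a \<in> carrier G" "a \<notin> grp_center G"
  then obtain x where x: "x \<in> carrier G" "a \<otimes> x \<noteq> x \<otimes> a" unfolding grp_center_def by blast
  define c where "c = a \<otimes> x \<otimes> inv a \<otimes> inv x"
  have "c \<otimes> (x \<otimes> a) = a \<otimes> x" unfolding c_def using a x by (simp add: m_assoc)
  then have "c \<noteq> \<one>" using x a by auto
  then obtain N where N: "fin_index_normal N G" "c \<notin> N"
    using assms a x unfolding residually_finite_def c_def by auto
  have sN: "subgroup N G" using fin_index_normal_subgroup[OF N(1)] .
  have "a \<notin> grp_center G <#> N"
  proof
    assume "a \<in> grp_center G <#> N"
    then obtain z n where zn: "z \<in> grp_center G" "n \<in> N" "a = z \<otimes> n" using mem_set_mult_iff by blast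
    have z: "z \<in> carrier G" "\<And>g. g \<in> carrier G \<Longrightarrow> z \<otimes> g = g \<otimes> z"
      using zn(1) unfolding grp_center_def by auto
    have nc: "n \<in> carrier G" using subgroup.mem_carrier[OF sN zn(2)] .
    have "c = z \<otimes> ((n \<otimes> x \<otimes> inv n) \<otimes> inv x) \<otimes> inv z"
      unfolding c_def zn(3) using z nc x by (simp add: m_assoc inv_mult_group)
    also have "\<dots> = n \<otimes> (x \<otimes> inv n \<otimes> inv x)"
      using z(2)[of "(n \<otimes> x \<otimes> inv n) \<otimes> inv x"] z(1) nc x by (simp add: m_assoc)
    finally have "c = n \<otimes> (x \<otimes> inv n \<otimes> inv x)" .
    moreover have "x \<otimes> inv n \<otimes> inv x \<in> N"
      using normal_invE(2)[OF _ x(1) subgroup.m_inv_closed[OF sN zn(2)]] N(1)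
      unfolding fin_index_normal_def by blast
    ultimately show False using N(2) subgroup.m_closed[OF sN zn(2)] by simp
  qed
  then show "\<exists>N. fin_index_normal N G \<and> a \<notin> grp_center G <#> N" using N(1) by blast
qed

lemma residually_finite_quotient_profinitely_closed:
  assumes H: "H \<lhd> G" and rf: "residually_finite (G Mod H)"
  shows "profinitely_closed G H"
  unfolding profinitely_closed_def
proof (intro ballI impI)
  fix a assume a: "a \<in> carrier G" "a \<notin> H"
  interpret H: normal H G by fact
  have hom: "(\<lambda>x. H #> x) \<in> hom G (G Mod H)" using H.r_coset_hom_Mod .
  have "H #> a \<noteq> \<one>\<^bsub>G Mod H\<^esub>" using rcos_eq_self_iff[OF H.subgroup_axioms a(1)] a(2) by simp
  then obtain Q where Q: "fin_index_normal Q (G Mod H)" "H #> a \<notin> Q"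
    using rf hom_in_carrier[OF hom a(1)] unfolding residually_finite_def by blast
  define N where "N = {x \<in> carrier G. H #> x \<in> Q}"
  have N: "fin_index_normal N G"
    unfolding N_def using fin_index_normal_preimage[OF H.factorgroup_is_group hom Q(1)] .
  have "\<one>\<^bsub>G Mod H\<^esub> \<in> Q"
    using Q(1) normal_imp_subgroup subgroup.one_closed unfolding fin_index_normal_def by blast
  then have "H \<subseteq> N" unfolding N_def using H.rcos_const[OF is_group] H.subset by auto
  then have "H <#> N \<subseteq> N" using set_mult_subset_subgroup[OF fin_index_normal_subgroup[OF N]] by blast
  moreover have "a \<notin> N" unfolding N_def using Q(2) by blast
  ultimately show "\<exists>N. fin_index_normal N G \<and> a \<notin> H <#> N" using N by blast
qed

lemma H_filtration_if_separating:
  assumes H: "subgroup H G" and F: "\<And>l. l \<in> I \<Longrightarrow> fin_index_normal (F l) G"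
    and sep_one: "\<And>a. a \<in> carrier G \<Longrightarrow> a \<noteq> \<one> \<Longrightarrow> \<exists>l\<in>I. a \<notin> F l"
    and sep_H: "\<And>a. a \<in> carrier G \<Longrightarrow> a \<notin> H \<Longrightarrow> \<exists>l\<in>I. a \<notin> H <#> F l"
  shows "H_filtration G H I F"
proof -
  have sF: "\<And>l. l \<in> I \<Longrightarrow> subgroup (F l) G" using F fin_index_normal_subgroup by blast
  have "carrier G \<inter> (\<Inter>l\<in>I. F l) = {\<one>}" using sep_one subgroup.one_closed[OF sF] by blast
  moreover have "H \<subseteq> H <#> F l" if "l \<in> I" for l
    using subset_set_mult_left[OF sF[OF that] subgroup.subset[OF H]] .
  then have "carrier G \<inter> (\<Inter>l\<in>I. H <#> F l) = H" using sep_H subgroup.subset[OF H] by blast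
  ultimately show ?thesis unfolding H_filtration_def filtration_def using F by blast
qed

lemma fin_index_normal_trace:
  assumes L: "L \<lhd> G" "profinitely_closed G L" and K: "subgroup K G" "L \<subseteq> K" "finite_index G K L"
  obtains M where "fin_index_normal M G" "K \<inter> M = L"
proof -
  obtain F where F: "finite F" "F \<subseteq> K" "K \<subseteq> L <#> F" using K(3) unfolding finite_index_def by blast
  have sL: "subgroup L G" using normal_imp_subgroup[OF L(1)] .
  define Mf where "Mf f = (SOME M. fin_index_normal M G \<and> f \<notin> L <#> M)" for f
  have Mf: "fin_index_normal (Mf f) G \<and> f \<notin> L <#> Mf f" if "f \<in> F - L" for f
    unfolding Mf_def by (rule someI_ex)
      (use that L(2) F(2) subgroup.subset[OF K(1)] in \<open>auto simp: profinitely_closed_def\<close>)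
  define M0 where "M0 = carrier G \<inter> \<Inter>(Mf ` (F - L))"
  have M0: "fin_index_normal M0 G" unfolding M0_def using F(1) Mf by (intro fin_index_normal_Inter) auto
  have sM0: "subgroup M0 G" using fin_index_normal_subgroup[OF M0] .
  have "K \<inter> (L <#> M0) \<subseteq> L"
  proof
    fix k assume k: "k \<in> K \<inter> (L <#> M0)"
    obtain l f where lf: "l \<in> L" "f \<in> F" "k = l \<otimes> f" using F(3) k mem_set_mult_iff by blast
    obtain l' m where lm: "l' \<in> L" "m \<in> M0" "k = l' \<otimes> m" using k mem_set_mult_iff by blast
    have c: "l \<in> carrier G" "l' \<in> carrier G" "m \<in> carrier G" "f \<in> carrier G"
      using lf lm F(2) subgroup.subset[OF sL] subgroup.subset[OF sM0] subgroup.subset[OF K(1)] by auto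
    show "k \<in> L"
    proof (rule ccontr)
      assume "k \<notin> L"
      then have f: "f \<in> F - L" using lf subgroup.m_closed[OF sL] by blast
      have "f = (inv l \<otimes> l') \<otimes> m" using lf(3) lm(3) c
        by (metis inv_solve_left m_assoc m_closed inv_closed)
      moreover have "inv l \<otimes> l' \<in> L"
        using subgroup.m_closed[OF sL subgroup.m_inv_closed[OF sL lf(1)] lm(1)] .
      moreover have "m \<in> Mf f" using lm(2) f unfolding M0_def by blast
      ultimately show False using Mf[OF f] set_multI by metis
    qed
  qed
  moreover have "L \<subseteq> L <#> M0" using subset_set_mult_left[OF sM0 subgroup.subset[OF sL]] .
  ultimately have "K \<inter> (L <#> M0) = L" using K(2) by blast
  then show ?thesis using that fin_index_normal_set_mult[OF L(1) M0] by blast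
qed

end

section \<open>Compatible filtrations\<close>

definition compatible_pairs ::
  "('a, 'm) monoid_scheme \<Rightarrow> ('b, 'n) monoid_scheme \<Rightarrow> 'a set \<Rightarrow> 'b set \<Rightarrow> ('a \<Rightarrow> 'b)
   \<Rightarrow> ('a set \<times> 'b set) set" where
  "compatible_pairs A B H K phi =
     {(N, M). fin_index_normal N A \<and> fin_index_normal M B \<and> phi ` (H \<inter> N) = K \<inter> M}"

lemma iso_subgroups:
  assumes A: "group A" and B: "group B" and H: "subgroup H A" and K: "subgroup K B"
    and phi: "phi \<in> iso (A\<lparr>carrier := H\<rparr>) (B\<lparr>carrier := K\<rparr>)"
  shows "phi ` H = K" and "inj_on phi H"
    and "\<And>x y. x \<in> H \<Longrightarrow> y \<in> H \<Longrightarrow> phi (x \<otimes>\<^bsub>A\<^esub> y) = phi x \<otimes>\<^bsub>B\<^esub> phi y"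
    and "\<And>x. x \<in> H \<Longrightarrow> phi (inv\<^bsub>A\<^esub> x) = inv\<^bsub>B\<^esub> (phi x)"
    and "phi \<one>\<^bsub>A\<^esub> = \<one>\<^bsub>B\<^esub>"
    and "\<And>L. subgroup L A \<Longrightarrow> L \<subseteq> H \<Longrightarrow> subgroup (phi ` L) B"
proof -
  interpret A: group A by fact
  interpret B: group B by fact
  interpret phi: group_hom "A\<lparr>carrier := H\<rparr>" "B\<lparr>carrier := K\<rparr>" phi
    using phi subgroup.subgroup_is_group[OF H A] subgroup.subgroup_is_group[OF K B]
    unfolding group_hom_def group_hom_axioms_def iso_def by blast
  show "phi ` H = K" "inj_on phi H" using phi unfolding iso_def bij_betw_def by auto
  show "\<And>x y. x \<in> H \<Longrightarrow> y \<in> H \<Longrightarrow> phi (x \<otimes>\<^bsub>A\<^esub> y) = phi x \<otimes>\<^bsub>B\<^esub> phi y"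
    using phi.hom_mult by simp
  show "phi \<one>\<^bsub>A\<^esub> = \<one>\<^bsub>B\<^esub>" using phi.hom_one by simp
  show "phi (inv\<^bsub>A\<^esub> x) = inv\<^bsub>B\<^esub> (phi x)" if "x \<in> H" for x
    using phi.hom_inv[of x] that A.m_inv_consistent[OF H] B.m_inv_consistent[OF K]
      phi.hom_closed[of x] by simp
  show "subgroup (phi ` L) B" if "subgroup L A" "L \<subseteq> H" for L
  proof -
    have "subgroup L (A\<lparr>carrier := H\<rparr>)" using A.subgroup_incl[OF that(1) H that(2)] .
    then show ?thesis using B.incl_subgroup[OF K phi.subgroup_img_is_subgroup] by blast
  qed
qed

lemma compatible_pairs_partner:
  assumes A: "group A" and B: "group B" and H: "subgroup H A" and K: "subgroup K B"
    and cen: "K \<subseteq> grp_center B" and phi: "phi \<in> iso (A\<lparr>carrier := H\<rparr>) (B\<lparr>carrier := K\<rparr>)"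
    and sepB: "subgroup_separable B (carrier B)" and N: "fin_index_normal N A"
  obtains M where "(N, M) \<in> compatible_pairs A B H K phi"
proof -
  interpret A: group A by fact
  interpret B: group B by fact
  note iso = iso_subgroups[OF A B H K phi]
  have sN: "subgroup N A" using A.fin_index_normal_subgroup[OF N] .
  define L where "L = phi ` (H \<inter> N)"
  have sL: "subgroup L B" and LK: "L \<subseteq> K"
    unfolding L_def using iso(1,6) A.subgroups_Inter_pair[OF H sN] by auto
  have fi: "finite_index B K L"
  proof -
    obtain F where F: "finite F" "F \<subseteq> H" "H \<subseteq> (H \<inter> N) <#>\<^bsub>A\<^esub> F"
      using A.finite_index_restrict[OF A.subgroup_self sN _ _ H] N
        subgroup.subset[OF H] subgroup.subset[OF sN]
      unfolding A.fin_index_normal_iff finite_index_def by (metis Int_commute)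
    have "K \<subseteq> L <#>\<^bsub>B\<^esub> phi ` F"
    proof
      fix k assume "k \<in> K"
      then obtain x where x: "x \<in> H" "k = phi x" using iso(1) by blast
      then obtain a b where ab: "a \<in> H \<inter> N" "b \<in> F" "x = a \<otimes>\<^bsub>A\<^esub> b"
        using F(3) A.mem_set_mult_iff by blast
      then have "k = phi a \<otimes>\<^bsub>B\<^esub> phi b" using x iso(3) F(2) by auto
      moreover have "phi a \<in> L" "phi b \<in> phi ` F" unfolding L_def using ab by auto
      ultimately show "k \<in> L <#>\<^bsub>B\<^esub> phi ` F" using B.set_multI by simp
    qed
    moreover have "phi ` F \<subseteq> K" using image_mono[OF F(2), of phi] unfolding iso(1) .
    ultimately show ?thesis unfolding finite_index_def using F(1) by blast
  qed
  have "L \<lhd> B" using B.central_subgroup_normal[OF sL] LK cen by blast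
  moreover have "profinitely_closed B L" using B.subgroup_separable_imp_profinitely_closed[OF sepB sL] .
  ultimately obtain M where "fin_index_normal M B" "K \<inter> M = L"
    using B.fin_index_normal_trace[OF _ _ K LK fi] by blast
  then show ?thesis using that N unfolding compatible_pairs_def L_def
    by (metis (mono_tags) case_prodI mem_Collect_eq)
qed

lemma rcos_eq_iff_image_rcos_eq:
  assumes A: "group A" and B: "group B" and H: "subgroup H A" and K: "subgroup K B"
    and phi: "phi \<in> iso (A\<lparr>carrier := H\<rparr>) (B\<lparr>carrier := K\<rparr>)"
    and NM: "(N, M) \<in> compatible_pairs A B H K phi" and h: "h \<in> H" "h' \<in> H"
  shows "N #>\<^bsub>A\<^esub> h = N #>\<^bsub>A\<^esub> h' \<longleftrightarrow> M #>\<^bsub>B\<^esub> phi h = M #>\<^bsub>B\<^esub> phi h'"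
proof -
  interpret A: group A by fact
  interpret B: group B by fact
  note iso = iso_subgroups[OF A B H K phi]
  have N: "subgroup N A" and M: "subgroup M B" and eq: "phi ` (H \<inter> N) = K \<inter> M"
    using NM A.fin_index_normal_subgroup B.fin_index_normal_subgroup unfolding compatible_pairs_def
    by auto
  have hh: "h \<otimes>\<^bsub>A\<^esub> inv\<^bsub>A\<^esub> h' \<in> H" using subgroup.m_closed[OF H h(1) subgroup.m_inv_closed[OF H h(2)]] .
  have phi_hh: "phi (h \<otimes>\<^bsub>A\<^esub> inv\<^bsub>A\<^esub> h') = phi h \<otimes>\<^bsub>B\<^esub> inv\<^bsub>B\<^esub> phi h'"
    using iso(3)[OF h(1) subgroup.m_inv_closed[OF H h(2)]] iso(4)[OF h(2)] by simp
  have "N #>\<^bsub>A\<^esub> h = N #>\<^bsub>A\<^esub> h' \<longleftrightarrow> h \<otimes>\<^bsub>A\<^esub> inv\<^bsub>A\<^esub> h' \<in> H \<inter> N"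
    using A.rcos_eq_iff[OF N] h hh subgroup.mem_carrier[OF H] by auto
  also have "\<dots> \<longleftrightarrow> phi (h \<otimes>\<^bsub>A\<^esub> inv\<^bsub>A\<^esub> h') \<in> K \<inter> M"
    unfolding eq[symmetric] using inj_on_image_mem_iff[OF iso(2) hh] by blast
  also have "\<dots> \<longleftrightarrow> M #>\<^bsub>B\<^esub> phi h = M #>\<^bsub>B\<^esub> phi h'"
    using B.rcos_eq_iff[OF M] iso(1) h imageI[OF hh, of phi] phi_hh subgroup.mem_carrier[OF K] by auto
  finally show ?thesis .
qed

lemma carrier_Mod_set_mult:
  assumes A: "group A" and H: "subgroup H A" and N: "N \<lhd> A"
  shows "carrier ((A\<lparr>carrier := H <#>\<^bsub>A\<^esub> N\<rparr>) Mod N) = (\<lambda>h. N #>\<^bsub>A\<^esub> h) ` H"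
proof -
  interpret A: group A by fact
  have sN: "subgroup N A" using normal_imp_subgroup[OF N] .
  have "N #>\<^bsub>A\<^esub> (h \<otimes>\<^bsub>A\<^esub> n) = N #>\<^bsub>A\<^esub> h" if "h \<in> H" "n \<in> N" for h n
  proof -
    have c: "h \<in> carrier A" "n \<in> carrier A"
      using subgroup.mem_carrier[OF H that(1)] subgroup.mem_carrier[OF sN that(2)] by auto
    then have "(h \<otimes>\<^bsub>A\<^esub> n) \<otimes>\<^bsub>A\<^esub> inv\<^bsub>A\<^esub> h \<in> N" using A.normal_invE(2)[OF N c(1) that(2)] by simp
    then show ?thesis using A.rcos_eq_iff[OF sN] c by simp
  qed
  moreover have "H \<subseteq> H <#>\<^bsub>A\<^esub> N" using A.subset_set_mult_left[OF sN subgroup.subset[OF H]] .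
  ultimately show ?thesis unfolding carrier_FactGroup by (force simp: A.mem_set_mult_iff)
qed

lemma induced_map_rcos:
  assumes "\<And>h h'. h \<in> H \<Longrightarrow> h' \<in> H \<Longrightarrow> N #>\<^bsub>A\<^esub> h = N #>\<^bsub>A\<^esub> h' \<Longrightarrow> M #>\<^bsub>B\<^esub> phi h = M #>\<^bsub>B\<^esub> phi h'"
    and "h \<in> H"
  shows "induced_map A B H phi N M (N #>\<^bsub>A\<^esub> h) = M #>\<^bsub>B\<^esub> phi h"
proof -
  have "(SOME h0. h0 \<in> H \<and> N #>\<^bsub>A\<^esub> h = N #>\<^bsub>A\<^esub> h0) \<in> H \<and>
      N #>\<^bsub>A\<^esub> h = N #>\<^bsub>A\<^esub> (SOME h0. h0 \<in> H \<and> N #>\<^bsub>A\<^esub> h = N #>\<^bsub>A\<^esub> h0)"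
    by (rule someI_ex) (use assms(2) in blast)
  then show ?thesis unfolding induced_map_def using assms by metis
qed

lemma compatible_pair_induced_map:
  assumes A: "group A" and B: "group B" and H: "subgroup H A" and K: "subgroup K B"
    and phi: "phi \<in> iso (A\<lparr>carrier := H\<rparr>) (B\<lparr>carrier := K\<rparr>)"
    and NM: "(N, M) \<in> compatible_pairs A B H K phi"
  shows "carrier ((A\<lparr>carrier := H <#>\<^bsub>A\<^esub> N\<rparr>) Mod N) = (\<lambda>h. N #>\<^bsub>A\<^esub> h) ` H"
    and "carrier ((B\<lparr>carrier := K <#>\<^bsub>B\<^esub> M\<rparr>) Mod M) = (\<lambda>h. M #>\<^bsub>B\<^esub> phi h) ` H"
    and "h \<in> H \<Longrightarrow> induced_map A B H phi N M (N #>\<^bsub>A\<^esub> h) = M #>\<^bsub>B\<^esub> phi h"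
proof -
  have nN: "N \<lhd> A" and nM: "M \<lhd> B" using NM unfolding compatible_pairs_def fin_index_normal_def by auto
  show "carrier ((A\<lparr>carrier := H <#>\<^bsub>A\<^esub> N\<rparr>) Mod N) = (\<lambda>h. N #>\<^bsub>A\<^esub> h) ` H"
    using carrier_Mod_set_mult[OF A H nN] .
  show "carrier ((B\<lparr>carrier := K <#>\<^bsub>B\<^esub> M\<rparr>) Mod M) = (\<lambda>h. M #>\<^bsub>B\<^esub> phi h) ` H"
    using carrier_Mod_set_mult[OF B K nM] unfolding iso_subgroups(1)[OF A B H K phi, symmetric]
    by (simp add: image_image)
  show "h \<in> H \<Longrightarrow> induced_map A B H phi N M (N #>\<^bsub>A\<^esub> h) = M #>\<^bsub>B\<^esub> phi h"
    by (rule induced_map_rcos) (use rcos_eq_iff_image_rcos_eq[OF A B H K phi NM] in auto)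
qed

lemma compatible_pair_induced_hom:
  assumes A: "group A" and B: "group B" and H: "subgroup H A" and K: "subgroup K B"
    and phi: "phi \<in> iso (A\<lparr>carrier := H\<rparr>) (B\<lparr>carrier := K\<rparr>)"
    and NM: "(N, M) \<in> compatible_pairs A B H K phi"
  shows "induced_map A B H phi N M
           \<in> hom ((A\<lparr>carrier := H <#>\<^bsub>A\<^esub> N\<rparr>) Mod N) ((B\<lparr>carrier := K <#>\<^bsub>B\<^esub> M\<rparr>) Mod M)"
proof -
  note iso = iso_subgroups[OF A B H K phi]
  note cA = compatible_pair_induced_map(1)[OF assms] and cB = compatible_pair_induced_map(2)[OF assms]
    and ind = compatible_pair_induced_map(3)[OF assms]
  have nN: "N \<lhd> A" and nM: "M \<lhd> B" using NM unfolding compatible_pairs_def fin_index_normal_def by auto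
  show ?thesis
  proof (rule homI)
    fix C assume "C \<in> carrier ((A\<lparr>carrier := H <#>\<^bsub>A\<^esub> N\<rparr>) Mod N)"
    then show "induced_map A B H phi N M C \<in> carrier ((B\<lparr>carrier := K <#>\<^bsub>B\<^esub> M\<rparr>) Mod M)"
      unfolding cA cB using ind by auto
  next
    fix C D assume "C \<in> carrier ((A\<lparr>carrier := H <#>\<^bsub>A\<^esub> N\<rparr>) Mod N)"
      "D \<in> carrier ((A\<lparr>carrier := H <#>\<^bsub>A\<^esub> N\<rparr>) Mod N)"
    then obtain h h' where h: "h \<in> H" "h' \<in> H" "C = N #>\<^bsub>A\<^esub> h" "D = N #>\<^bsub>A\<^esub> h'" unfolding cA by blast
    have c: "h \<in> carrier A" "h' \<in> carrier A" "phi h \<in> carrier B" "phi h' \<in> carrier B"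
      using h iso(1) subgroup.mem_carrier[OF H] subgroup.mem_carrier[OF K] by auto
    have "C <#>\<^bsub>A\<^esub> D = N #>\<^bsub>A\<^esub> (h \<otimes>\<^bsub>A\<^esub> h')" using normal.rcos_sum[OF nN c(1,2)] h by simp
    moreover have "(M #>\<^bsub>B\<^esub> phi h) <#>\<^bsub>B\<^esub> (M #>\<^bsub>B\<^esub> phi h') = M #>\<^bsub>B\<^esub> phi (h \<otimes>\<^bsub>A\<^esub> h')"
      using normal.rcos_sum[OF nM c(3,4)] iso(3) h by simp
    ultimately show "induced_map A B H phi N M (C \<otimes>\<^bsub>(A\<lparr>carrier := H <#>\<^bsub>A\<^esub> N\<rparr>) Mod N\<^esub> D)
        = induced_map A B H phi N M C \<otimes>\<^bsub>(B\<lparr>carrier := K <#>\<^bsub>B\<^esub> M\<rparr>) Mod M\<^esub> induced_map A B H phi N M D"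
      using ind h subgroup.m_closed[OF H h(1,2)] by simp
  qed
qed

lemma compatible_pair_induced_iso:
  assumes "group A" "group B" "subgroup H A" "subgroup K B"
    and "phi \<in> iso (A\<lparr>carrier := H\<rparr>) (B\<lparr>carrier := K\<rparr>)"
    and "(N, M) \<in> compatible_pairs A B H K phi"
  shows "induced_map A B H phi N M
           \<in> iso ((A\<lparr>carrier := H <#>\<^bsub>A\<^esub> N\<rparr>) Mod N) ((B\<lparr>carrier := K <#>\<^bsub>B\<^esub> M\<rparr>) Mod M)"
proof -
  note same = rcos_eq_iff_image_rcos_eq[OF assms]
  note cA = compatible_pair_induced_map(1)[OF assms] and cB = compatible_pair_induced_map(2)[OF assms]
    and ind = compatible_pair_induced_map(3)[OF assms]
  have "inj_on (induced_map A B H phi N M) ((\<lambda>h. N #>\<^bsub>A\<^esub> h) ` H)"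
  proof (rule inj_onI)
    fix C D assume "C \<in> (\<lambda>h. N #>\<^bsub>A\<^esub> h) ` H" "D \<in> (\<lambda>h. N #>\<^bsub>A\<^esub> h) ` H"
      and eq: "induced_map A B H phi N M C = induced_map A B H phi N M D"
    then obtain h h' where h: "h \<in> H" "h' \<in> H" "C = N #>\<^bsub>A\<^esub> h" "D = N #>\<^bsub>A\<^esub> h'" by blast
    then have "M #>\<^bsub>B\<^esub> phi h = M #>\<^bsub>B\<^esub> phi h'" using eq ind by simp
    then show "C = D" using same[OF h(1,2)] h(3,4) by simp
  qed
  moreover have "induced_map A B H phi N M ` ((\<lambda>h. N #>\<^bsub>A\<^esub> h) ` H) = (\<lambda>h. M #>\<^bsub>B\<^esub> phi h) ` H"
    using ind by (simp add: image_image)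
  ultimately show ?thesis
    using compatible_pair_induced_hom[OF assms] unfolding iso_def bij_betw_def cA cB by blast
qed

lemma compatible_pairs_fst_H_filtration:
  assumes A: "group A" and B: "group B" and H: "subgroup H A" and K: "subgroup K B"
    and cen: "K \<subseteq> grp_center B" and phi: "phi \<in> iso (A\<lparr>carrier := H\<rparr>) (B\<lparr>carrier := K\<rparr>)"
    and rfA: "residually_finite A" and clA: "profinitely_closed A H"
    and sepB: "subgroup_separable B (carrier B)"
  shows "H_filtration A H (compatible_pairs A B H K phi) fst"
proof -
  interpret A: group A by fact
  note partner = compatible_pairs_partner[OF A B H K cen phi sepB]
  show ?thesis
  proof (rule A.H_filtration_if_separating[OF H])
    show "fin_index_normal (fst l) A" if "l \<in> compatible_pairs A B H K phi" for l
      using that unfolding compatible_pairs_def by auto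
  next
    fix a assume "a \<in> carrier A" "a \<noteq> \<one>\<^bsub>A\<^esub>"
    then obtain N where "fin_index_normal N A" "a \<notin> N" using rfA unfolding residually_finite_def by blast
    then show "\<exists>l\<in>compatible_pairs A B H K phi. a \<notin> fst l" using partner by (metis fst_conv)
  next
    fix a assume "a \<in> carrier A" "a \<notin> H"
    then obtain N where "fin_index_normal N A" "a \<notin> H <#>\<^bsub>A\<^esub> N" using clA
      unfolding profinitely_closed_def by blast
    then show "\<exists>l\<in>compatible_pairs A B H K phi. a \<notin> H <#>\<^bsub>A\<^esub> fst l" using partner by (metis fst_conv)
  qed
qed

lemma compatible_pairs_carrier:
  assumes A: "group A" and B: "group B" and H: "subgroup H A" and K: "subgroup K B"
    and cen: "K \<subseteq> grp_center B" and phi: "phi \<in> iso (A\<lparr>carrier := H\<rparr>) (B\<lparr>carrier := K\<rparr>)"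
    and M: "fin_index_normal M B"
  shows "(carrier A, K <#>\<^bsub>B\<^esub> M) \<in> compatible_pairs A B H K phi"
    and "K <#>\<^bsub>B\<^esub> (K <#>\<^bsub>B\<^esub> M) = K <#>\<^bsub>B\<^esub> M"
proof -
  interpret A: group A by fact
  interpret B: group B by fact
  have Kc: "K \<subseteq> carrier B" and Mc: "M \<subseteq> carrier B"
    using subgroup.subset[OF K] subgroup.subset[OF B.fin_index_normal_subgroup[OF M]] .
  have "K \<subseteq> K <#>\<^bsub>B\<^esub> M" using B.subset_set_mult_left[OF B.fin_index_normal_subgroup[OF M] Kc] .
  moreover have "phi ` (H \<inter> carrier A) = K"
    using iso_subgroups(1)[OF A B H K phi] subgroup.subset[OF H] by (simp add: Int_absorb2)
  ultimately show "(carrier A, K <#>\<^bsub>B\<^esub> M) \<in> compatible_pairs A B H K phi"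
    unfolding compatible_pairs_def using A.fin_index_normal_carrier
      B.fin_index_normal_set_mult[OF B.central_subgroup_normal[OF K cen] M] by auto
  show "K <#>\<^bsub>B\<^esub> (K <#>\<^bsub>B\<^esub> M) = K <#>\<^bsub>B\<^esub> M"
    using B.set_mult_assoc[OF Kc Kc Mc] B.subgroup_mult_id[OF K] by simp
qed

lemma compatible_pairs_snd_H_filtration:
  assumes A: "group A" and B: "group B" and H: "subgroup H A" and K: "subgroup K B"
    and cen: "K \<subseteq> grp_center B" and phi: "phi \<in> iso (A\<lparr>carrier := H\<rparr>) (B\<lparr>carrier := K\<rparr>)"
    and rfA: "residually_finite A" and sepB: "subgroup_separable B (carrier B)"
  shows "H_filtration B K (compatible_pairs A B H K phi) snd"
proof -
  interpret B: group B by fact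
  note iso = iso_subgroups[OF A B H K phi]
  note carrier_pair = compatible_pairs_carrier[OF A B H K cen phi]
  have clK: "profinitely_closed B K" using B.subgroup_separable_imp_profinitely_closed[OF sepB K] .
  show ?thesis
  proof (rule B.H_filtration_if_separating[OF K])
    show "fin_index_normal (snd l) B" if "l \<in> compatible_pairs A B H K phi" for l
      using that unfolding compatible_pairs_def by auto
  next
    fix b assume b: "b \<in> carrier B" "b \<notin> K"
    then obtain M where "fin_index_normal M B" "b \<notin> K <#>\<^bsub>B\<^esub> M" using clK
      unfolding profinitely_closed_def by blast
    then show "\<exists>l\<in>compatible_pairs A B H K phi. b \<notin> K <#>\<^bsub>B\<^esub> snd l" using carrier_pair by (metis snd_conv)
  next
    fix b assume b: "b \<in> carrier B" "b \<noteq> \<one>\<^bsub>B\<^esub>"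
    show "\<exists>l\<in>compatible_pairs A B H K phi. b \<notin> snd l"
    proof (cases "b \<in> K")
      case False
      then obtain M where "fin_index_normal M B" "b \<notin> K <#>\<^bsub>B\<^esub> M" using clK b
        unfolding profinitely_closed_def by blast
      then show ?thesis using carrier_pair by (metis snd_conv)
    next
      case True
      then obtain h where h: "h \<in> H" "b = phi h" using iso(1) by blast
      then have "h \<in> carrier A" "h \<noteq> \<one>\<^bsub>A\<^esub>" using b(2) iso(5) subgroup.mem_carrier[OF H] by auto
      then obtain N where N: "fin_index_normal N A" "h \<notin> N" using rfA
        unfolding residually_finite_def by blast
      then obtain M where NM: "(N, M) \<in> compatible_pairs A B H K phi"
        using compatible_pairs_partner[OF A B H K cen phi sepB] by blast
      have "b \<notin> M"
      proof
        assume "b \<in> M"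
        then have "phi h \<in> phi ` (H \<inter> N)" using NM True h(2) unfolding compatible_pairs_def by auto
        then show False using inj_on_image_mem_iff[OF iso(2) h(1)] N(2) by blast
      qed
      then show ?thesis using NM by (metis snd_conv)
    qed
  qed
qed

lemma compatible_pairs_compatible:
  assumes A: "group A" and B: "group B" and H: "subgroup H A" and K: "subgroup K B"
    and cen: "K \<subseteq> grp_center B" and phi: "phi \<in> iso (A\<lparr>carrier := H\<rparr>) (B\<lparr>carrier := K\<rparr>)"
    and rfA: "residually_finite A" and "profinitely_closed A H"
    and sepB: "subgroup_separable B (carrier B)"
  shows "compatible A B H K phi (compatible_pairs A B H K phi) fst snd"
  unfolding compatible_def
  using compatible_pairs_fst_H_filtration[OF assms]
    compatible_pairs_snd_H_filtration[OF A B H K cen phi rfA sepB]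
    rcos_eq_iff_image_rcos_eq[OF A B H K phi] compatible_pair_induced_iso[OF A B H K phi]
  by auto

theorem corollary3p8:
  fixes A :: "('a, 'm) monoid_scheme" and B :: "('b, 'n) monoid_scheme"
    and H :: "'a set" and K :: "'b set" and phi :: "'a \<Rightarrow> 'b"
  assumes "group A" and "residually_finite A" and "subgroup H A"
    and "group B" and "subgroup K B" and "K \<subseteq> grp_center B"
    and "phi \<in> iso (A\<lparr>carrier := H\<rparr>) (B\<lparr>carrier := K\<rparr>)"
    and "(H = grp_center A \<and> polycyclic_by_finite B)
       \<or> (H \<lhd> A \<and> residually_finite (A Mod H) \<and> polycyclic_by_finite B)
       \<or> (polycyclic_by_finite A \<and> polycyclic_by_finite B)"
  shows "\<exists>(I :: ('a set \<times> 'b set) set) FA FB. compatible A B H K phi I FA FB"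
proof -
  interpret A: group A by fact
  interpret B: group B by fact
  have "subgroup_separable B (carrier B)"
    using B.polycyclic_by_finite_subgroup_separable assms(8) by blast
  moreover have "profinitely_closed A H"
    using assms(8)
  proof (elim disjE conjE)
    assume "H = grp_center A"
    then show ?thesis using A.residually_finite_center_profinitely_closed[OF assms(2)] by simp
  next
    assume "H \<lhd> A" "residually_finite (A Mod H)"
    then show ?thesis by (rule A.residually_finite_quotient_profinitely_closed)
  next
    assume "polycyclic_by_finite A"
    then show ?thesis
      using A.polycyclic_by_finite_subgroup_separable A.subgroup_separable_imp_profinitely_closed assms(3)
      by blast
  qed
  ultimately show ?thesis using compatible_pairs_compatible[OF assms(1,4,3,5,6,7,2)] by blast
qed

end
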